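(* Let $C$ and $H$ be commutative Hopf algebras over a field $k$ (with antipodes $S_C$, $S_H$) such that $(C,\rho^l,\rho^r)$ is an $H$-bicomodule Hopf algebra. Let $R:C\to C$ be a linear map and let $B$ be a Rota-Baxter co-operator on $H$. Define $\widetilde{B}:C\ltimes H\to C\ltimes H$ by $$\widetilde{B}(c\ltimes h)=R(c_{(0)[0]})\ltimes B\big(c_{(-1)}c_{(0)[1]}h\big),\qquad c\in C,\ h\in H.$$ Then $\widetilde{B}$ is a Rota-Baxter co-operator on $C\ltimes H$ if and only if $R$ is a Rota-Baxter co-operator on $C$ and, for all $c\in C$, $$R(c)_{1[0]1}\,R\big(R(c)_{1[0]2}\,S_C(R(c)_{3(0)})\big)\otimes R(c)_2\otimes R(c)_{1[1]}R(c)_{3(-1)}=R(c_{1(0)})\otimes R(c_2)\otimes B\big(S_H(c_{1(-1)})\big),$$ $$R(c)_{[0](-1)1}\,B\big(R(c)_{[0](-1)2}\,S_H(R(c)_{[1]})\big)\otimes R(c)_{[0](0)}=B\big(S_H(c_{[1]})\big)\otimes R(c_{[0]}).$$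
   Context: Sweedler notation: $\Delta(c)=c_1\otimes c_2$ (iterated $c_1\otimes c_2\otimes c_3\otimes\cdots$), left coaction $\rho^l(c)=c_{(-1)}\otimes c_{(0)}\in H\otimes C$, right coaction $\rho^r(c)=c_{[0]}\otimes c_{[1]}\in C\otimes H$; subscripts compose left to right, e.g. $R(c)_{1[0]2}$ means: take $R(c)_1$ from $\Delta^{(2)}(R(c))=R(c)_1\otimes R(c)_2\otimes R(c)_3$, apply $\rho^r$ to get $R(c)_{1[0]}\otimes R(c)_{1[1]}$, then apply $\Delta$ to $R(c)_{1[0]}$ to get $R(c)_{1[0]1}\otimes R(c)_{1[0]2}$. A Rota-Baxter co-operator on a commutative Hopf algebra $(H,S)$ is an algebra map $B:H\to H$ with $B(x_1)\otimes B(x_2)=B(x)_1B\big(B(x)_2S(B(x)_4)\big)\otimes B(x)_3$ for all $x$. $C$ is an $H$-bicomodule Hopf algebra if $C$ is an $H$-bicomodule via $\rho^l,\rho^r$ (so $(\mathrm{id}\otimes\rho^r)\rho^l=(\rho^l\otimes\mathrm{id})\rho^r$) such that $\rho^l,\rho^r$ are algebra maps ($(ab)_{(-1)}\otimes(ab)_{(0)}=a_{(-1)}b_{(-1)}\otimes a_{(0)}b_{(0)}$, $(ab)_{[0]}\otimes(ab)_{[1]}=a_{[0]}b_{[0]}\otimes a_{[1]}b_{[1]}$, $\rho^l(1)=1\otimes1$, $\rho^r(1)=1\otimes 1$), $c_{(-1)}\otimes c_{(0)1}\otimes c_{(0)2}=c_{1(-1)}c_{2(-1)}\otimes c_{1(0)}\otimes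 c_{2(0)}$, $c_{[0]1}\otimes c_{[0]2}\otimes c_{[1]}=c_{1[0]}\otimes c_{2[0]}\otimes c_{1[1]}c_{2[1]}$, $\varepsilon(c_{(0)})c_{(-1)}=\varepsilon(c)1_H=\varepsilon(c_{[0]})c_{[1]}$, and $S_C$ is $H$-bicolinear. The L-R smash coproduct $C\ltimes H$ is $C\otimes H$ (elements $c\ltimes h$) with the tensor product algebra structure $(c\ltimes g)(d\ltimes h)=cd\ltimes gh$, unit $1_C\ltimes 1_H$, comultiplication $\Delta(c\ltimes h)=(c_{1[0]}\ltimes c_{2(-1)}h_1)\otimes(c_{2(0)}\ltimes h_2c_{1[1]})$, counit $\varepsilon(c)\varepsilon(h)$, antipode $S(c\ltimes h)=S_C(c_{(0)[0]})\ltimes S_H(c_{(-1)}c_{(0)[1]}h)$; for commutative $H$ this is a Hopf algebra (commutative when $C,H$ are). *)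

theory Defs
  imports "HOL-Library.Poly_Mapping"
begin

text \<open>Vector spaces over a field k are modelled as free vector spaces
  (basis functions of finite support) on a basis type 'a (every vector space has a basis).
  Then V('a) \<otimes> V('b) = V('a \<times> 'b).  Linear maps V('a) \<rightarrow> V('b) are given by
  their values on basis elements ('a \<Rightarrow> V('b)) and extended linearly by lin.
  Sweedler-notation expressions are evaluated by applying the structure maps
  and the basis-level formula, extended linearly (nested lin).\<close>

type_synonym ('a,'k) vec = "'a \<Rightarrow>\<^sub>0 'k"

definition scal :: "'k::field \<Rightarrow> ('a,'k) vec \<Rightarrow> ('a,'k) vec" where
  "scal c v = Poly_Mapping.map (\<lambda>x. c * x) v"

definition bas :: "'a \<Rightarrow> ('a,'k::field) vec" where
  "bas a = Poly_Mapping.single a 1"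

definition lin :: "('a \<Rightarrow> ('b,'k::field) vec) \<Rightarrow> ('a,'k) vec \<Rightarrow> ('b,'k) vec" where
  "lin f v = (\<Sum>a\<in>Poly_Mapping.keys v. scal (Poly_Mapping.lookup v a) (f a))"

definition lfun :: "('a \<Rightarrow> 'k::field) \<Rightarrow> ('a,'k) vec \<Rightarrow> 'k" where
  "lfun f v = (\<Sum>a\<in>Poly_Mapping.keys v. Poly_Mapping.lookup v a * f a)"

definition tens :: "('a,'k::field) vec \<Rightarrow> ('b,'k) vec \<Rightarrow> ('a \<times> 'b,'k) vec" where
  "tens v w = lin (\<lambda>a. lin (\<lambda>b. bas (a,b)) w) v"

record (overloaded) ('b,'k) hopf =
  hmult :: "'b \<Rightarrow> 'b \<Rightarrow> ('b,'k) vec"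
  hone :: "('b,'k) vec"
  hcomult :: "'b \<Rightarrow> ('b \<times> 'b,'k) vec"
  hcounit :: "'b \<Rightarrow> 'k"
  hantipode :: "'b \<Rightarrow> ('b,'k) vec"

definition mulv :: "('b,'k::field) hopf \<Rightarrow> ('b,'k) vec \<Rightarrow> ('b,'k) vec \<Rightarrow> ('b,'k) vec" where
  "mulv H x y = lin (\<lambda>a. lin (\<lambda>b. hmult H a b) y) x"

definition comv :: "('b,'k::field) hopf \<Rightarrow> ('b,'k) vec \<Rightarrow> ('b \<times> 'b,'k) vec" where
  "comv H x = lin (hcomult H) x"

definition cou :: "('b,'k::field) hopf \<Rightarrow> ('b,'k) vec \<Rightarrow> 'k" where
  "cou H x = lfun (hcounit H) x"

definition antv :: "('b,'k::field) hopf \<Rightarrow> ('b,'k) vec \<Rightarrow> ('b,'k) vec" where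
  "antv H x = lin (hantipode H) x"

definition com2 :: "('b,'k::field) hopf \<Rightarrow> ('b,'k) vec \<Rightarrow> ('b \<times> 'b \<times> 'b,'k) vec" where
  "com2 H x = lin (\<lambda>(a,b). lin (\<lambda>(b1,b2). bas (a,(b1,b2))) (hcomult H b)) (comv H x)"

definition com3 :: "('b,'k::field) hopf \<Rightarrow> ('b,'k) vec \<Rightarrow> ('b \<times> 'b \<times> 'b \<times> 'b,'k) vec" where
  "com3 H x = lin (\<lambda>(a,b). lin (\<lambda>(b1,(b2,b3)). bas (a,(b1,(b2,b3)))) (com2 H (bas b))) (comv H x)"

definition tprod :: "('a,'k::field) hopf \<Rightarrow> ('b,'k) hopf \<Rightarrow> ('a \<times> 'b,'k) vec \<Rightarrow> ('a \<times> 'b,'k) vec \<Rightarrow> ('a \<times> 'b,'k) vec" where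
  "tprod H K x y = lin (\<lambda>(a,b). lin (\<lambda>(c,d). tens (hmult H a c) (hmult K b d)) y) x"

definition is_hopf :: "('b,'k::field) hopf \<Rightarrow> bool" where
  "is_hopf H \<longleftrightarrow>
     (\<forall>x y z. mulv H (mulv H x y) z = mulv H x (mulv H y z)) \<and>
     (\<forall>x. mulv H (hone H) x = x \<and> mulv H x (hone H) = x) \<and>
     (\<forall>x. lin (\<lambda>(a,b). lin (\<lambda>(a1,a2). bas (a1,(a2,b))) (hcomult H a)) (comv H x) = com2 H x) \<and>
     (\<forall>x. lin (\<lambda>(a,b). scal (hcounit H a) (bas b)) (comv H x) = x \<and>
          lin (\<lambda>(a,b). scal (hcounit H b) (bas a)) (comv H x) = x) \<and>
     (\<forall>x y. comv H (mulv H x y) = tprod H H (comv H x) (comv H y)) \<and>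
     comv H (hone H) = tens (hone H) (hone H) \<and>
     (\<forall>x y. cou H (mulv H x y) = cou H x * cou H y) \<and> cou H (hone H) = 1 \<and>
     (\<forall>x. lin (\<lambda>(a,b). mulv H (hantipode H a) (bas b)) (comv H x) = scal (cou H x) (hone H) \<and>
          lin (\<lambda>(a,b). mulv H (bas a) (hantipode H b)) (comv H x) = scal (cou H x) (hone H))"

definition comm_hopf :: "('b,'k::field) hopf \<Rightarrow> bool" where
  "comm_hopf H \<longleftrightarrow> is_hopf H \<and> (\<forall>x y. mulv H x y = mulv H y x)"

definition bicomod_hopf :: "('h,'k::field) hopf \<Rightarrow> ('c,'k) hopf \<Rightarrow>
    ('c \<Rightarrow> ('h \<times> 'c,'k) vec) \<Rightarrow> ('c \<Rightarrow> ('c \<times> 'h,'k) vec) \<Rightarrow> bool" where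
  "bicomod_hopf H C rl rr \<longleftrightarrow>
     \<comment> \<open>left comodule\<close>
     (\<forall>x. lin (\<lambda>(h,c). lin (\<lambda>(h',c'). bas (h,(h',c'))) (rl c)) (lin rl x) =
          lin (\<lambda>(h,c). lin (\<lambda>(h1,h2). bas (h1,(h2,c))) (hcomult H h)) (lin rl x)) \<and>
     (\<forall>x. lin (\<lambda>(h,c). scal (hcounit H h) (bas c)) (lin rl x) = x) \<and>
     \<comment> \<open>right comodule\<close>
     (\<forall>x. lin (\<lambda>(c,h). lin (\<lambda>(c',h'). bas (c',(h',h))) (rr c)) (lin rr x) =
          lin (\<lambda>(c,h). lin (\<lambda>(h1,h2). bas (c,(h1,h2))) (hcomult H h)) (lin rr x)) \<and>
     (\<forall>x. lin (\<lambda>(c,h). scal (hcounit H h) (bas c)) (lin rr x) = x) \<and>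
     \<comment> \<open>bicomodule compatibility\<close>
     (\<forall>x. lin (\<lambda>(h,c). lin (\<lambda>(c',h'). bas (h,(c',h'))) (rr c)) (lin rl x) =
          lin (\<lambda>(c,h). lin (\<lambda>(h',c'). bas (h',(c',h))) (rl c)) (lin rr x)) \<and>
     \<comment> \<open>coactions are algebra maps\<close>
     (\<forall>x y. lin rl (mulv C x y) = tprod H C (lin rl x) (lin rl y)) \<and>
     lin rl (hone C) = tens (hone H) (hone C) \<and>
     (\<forall>x y. lin rr (mulv C x y) = tprod C H (lin rr x) (lin rr y)) \<and>
     lin rr (hone C) = tens (hone C) (hone H) \<and>
     \<comment> \<open>compatibility with comultiplication\<close>
     (\<forall>x. lin (\<lambda>(h,c). lin (\<lambda>(c1,c2). bas (h,(c1,c2))) (hcomult C c)) (lin rl x) =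
          lin (\<lambda>(a,b). lin (\<lambda>(h,c). lin (\<lambda>(h',c'). tens (hmult H h h') (bas (c,c'))) (rl b)) (rl a)) (comv C x)) \<and>
     (\<forall>x. lin (\<lambda>(c,h). lin (\<lambda>(c1,c2). bas (c1,(c2,h))) (hcomult C c)) (lin rr x) =
          lin (\<lambda>(a,b). lin (\<lambda>(c,h). lin (\<lambda>(c',h'). tens (bas c) (tens (bas c') (hmult H h h'))) (rr b)) (rr a)) (comv C x)) \<and>
     \<comment> \<open>compatibility with counit\<close>
     (\<forall>x. lin (\<lambda>(h,c). scal (hcounit C c) (bas h)) (lin rl x) = scal (cou C x) (hone H)) \<and>
     (\<forall>x. lin (\<lambda>(c,h). scal (hcounit C c) (bas h)) (lin rr x) = scal (cou C x) (hone H)) \<and>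
     \<comment> \<open>S_C is H-bicolinear\<close>
     (\<forall>x. lin rl (antv C x) = lin (\<lambda>(h,c). tens (bas h) (hantipode C c)) (lin rl x)) \<and>
     (\<forall>x. lin rr (antv C x) = lin (\<lambda>(c,h). tens (hantipode C c) (bas h)) (lin rr x))"

definition smash :: "('h,'k::field) hopf \<Rightarrow> ('c,'k) hopf \<Rightarrow>
    ('c \<Rightarrow> ('h \<times> 'c,'k) vec) \<Rightarrow> ('c \<Rightarrow> ('c \<times> 'h,'k) vec) \<Rightarrow> ('c \<times> 'h,'k) hopf" where
  "smash H C rl rr =
    \<lparr> hmult = (\<lambda>(c,g) (d,h). tens (hmult C c d) (hmult H g h)),
      hone = tens (hone C) (hone H),
      hcomult = (\<lambda>(c,h). lin (\<lambda>(a,b). lin (\<lambda>(a0,a1). lin (\<lambda>(bm,b0). lin (\<lambda>(h1,h2).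
                   tens (tens (bas a0) (hmult H bm h1)) (tens (bas b0) (hmult H h2 a1)))
                 (hcomult H h)) (rl b)) (rr a)) (hcomult C c)),
      hcounit = (\<lambda>(c,h). hcounit C c * hcounit H h),
      hantipode = (\<lambda>(c,h). lin (\<lambda>(m,c0). lin (\<lambda>(c00,c01).
                   tens (hantipode C c00) (antv H (mulv H (mulv H (bas m) (bas c01)) (bas h))))
                 (rr c0)) (rl c)) \<rparr>"

definition rb_coop :: "('b,'k::field) hopf \<Rightarrow> ('b \<Rightarrow> ('b,'k) vec) \<Rightarrow> bool" where
  "rb_coop H B \<longleftrightarrow>
     (\<forall>x y. lin B (mulv H x y) = mulv H (lin B x) (lin B y)) \<and> lin B (hone H) = hone H \<and>
     (\<forall>x. lin (\<lambda>(a,b). tens (B a) (B b)) (comv H x) =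
          lin (\<lambda>(a,(b,(c,d))). tens (mulv H (bas a) (lin B (mulv H (bas b) (hantipode H d)))) (bas c))
              (com3 H (lin B x)))"

definition Btilde :: "('h,'k::field) hopf \<Rightarrow> ('c \<Rightarrow> ('h \<times> 'c,'k) vec) \<Rightarrow> ('c \<Rightarrow> ('c \<times> 'h,'k) vec) \<Rightarrow>
    ('c \<Rightarrow> ('c,'k) vec) \<Rightarrow> ('h \<Rightarrow> ('h,'k) vec) \<Rightarrow> ('c \<times> 'h) \<Rightarrow> ('c \<times> 'h,'k) vec" where
  "Btilde H rl rr R B = (\<lambda>(c,h). lin (\<lambda>(m,c0). lin (\<lambda>(c00,c01).
       tens (R c00) (lin B (mulv H (mulv H (bas m) (bas c01)) (bas h)))) (rr c0)) (rl c))"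

definition cond1 :: "('h,'k::field) hopf \<Rightarrow> ('c,'k) hopf \<Rightarrow> ('c \<Rightarrow> ('h \<times> 'c,'k) vec) \<Rightarrow> ('c \<Rightarrow> ('c \<times> 'h,'k) vec) \<Rightarrow>
    ('c \<Rightarrow> ('c,'k) vec) \<Rightarrow> ('h \<Rightarrow> ('h,'k) vec) \<Rightarrow> ('c,'k) vec \<Rightarrow> bool" where
  "cond1 H C rl rr R B c \<longleftrightarrow>
     lin (\<lambda>(p,(q,r)). lin (\<lambda>(p0,p1). lin (\<lambda>(a,b). lin (\<lambda>(s,t).
           tens (mulv C (bas a) (lin R (mulv C (bas b) (hantipode C t)))) (tens (bas q) (hmult H p1 s)))
         (rl r)) (hcomult C p0)) (rr p)) (com2 C (lin R c))
   = lin (\<lambda>(a,b). lin (\<lambda>(s,t). tens (R t) (tens (R b) (lin B (hantipode H s)))) (rl a)) (comv C c)"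

definition cond2 :: "('h,'k::field) hopf \<Rightarrow> ('c \<Rightarrow> ('h \<times> 'c,'k) vec) \<Rightarrow> ('c \<Rightarrow> ('c \<times> 'h,'k) vec) \<Rightarrow>
    ('c \<Rightarrow> ('c,'k) vec) \<Rightarrow> ('h \<Rightarrow> ('h,'k) vec) \<Rightarrow> ('c,'k) vec \<Rightarrow> bool" where
  "cond2 H rl rr R B c \<longleftrightarrow>
     lin (\<lambda>(p,q). lin (\<lambda>(s,t). lin (\<lambda>(a,b).
           tens (mulv H (bas a) (lin B (mulv H (bas b) (hantipode H q)))) (bas t))
         (hcomult H s)) (rl p)) (lin rr (lin R c))
   = lin (\<lambda>(p,q). tens (lin B (hantipode H q)) (R p)) (lin rr c)"

end

theory Submission
  imports Defs
begin

text \<open>For a commutative Hopf algebra \<open>X\<close>, the algebra maps from \<open>X\<close> to a commutative algebra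
  \<open>A\<close> (the \<open>A\<close>-valued points of \<open>X\<close>) form a group under convolution, with inverse \<open>p \<circ> S\<close>.
  Identities between vectors of tensor powers of \<open>X\<close> can be checked on points, because pairing
  with the universal points into \<open>X \<otimes> X\<close> (or \<open>X \<otimes> X \<otimes> X\<close>) is the identity. In this language a
  Rota-Baxter co-operator \<open>T\<close> is a Rota-Baxter operator \<open>p \<mapsto> p \<circ> T\<close> on the group of points.

  The coactions let \<open>H\<close>-points act on \<open>C\<close>-points from both sides, the points of \<open>C \<ltimes> H\<close> are
  the pairs \<open>(x, g)\<close> of points of \<open>C\<close> and \<open>H\<close> with product
  \<open>(x, g)(y, h) = ((x \<triangleleft> h)(g \<triangleright> y), g h)\<close>, and \<open>Btilde\<close> acts by
  \<open>(x, g) \<mapsto> (\<gamma> \<triangleright> (x \<circ> R) \<triangleleft> \<gamma>, \<gamma>)\<close> with \<open>\<gamma> = g \<circ> B\<close>. The Rota-Baxter identity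
  for \<open>Btilde\<close> then has an \<open>H\<close>-component, which is the identity for \<open>B\<close>, and a \<open>C\<close>-component.
  Evaluated at the points \<open>(x, \<epsilon>)\<close>, \<open>(\<epsilon>, g)\<close> and \<open>(y, h)\<close>, the \<open>C\<close>-component yields the
  Rota-Baxter identity for \<open>R\<close> and the two conditions (in their point form); conversely, the two
  conditions give back the \<open>C\<close>-component by a computation in these groups.\<close>

section \<open>Linear maps between free vector spaces\<close>

lemma lookup_scal [simp]: "Poly_Mapping.lookup (scal c v) a = c * Poly_Mapping.lookup v a"
  unfolding scal_def by transfer (simp add: when_def)

lemma scal_zero_left [simp]: "scal 0 v = 0"
  by (rule poly_mapping_eqI) simp

lemma scal_one [simp]: "scal 1 v = v"
  by (rule poly_mapping_eqI) simp

lemma scal_zero_right [simp]: "scal c 0 = 0"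
  by (rule poly_mapping_eqI) simp

lemma scal_scal [simp]: "scal c (scal d v) = scal (c * d) v"
  by (rule poly_mapping_eqI) simp

lemma scal_add_right: "scal c (v + w) = scal c v + scal c w"
  by (rule poly_mapping_eqI) (simp add: lookup_add distrib_left)

lemma scal_add_left: "scal (c + d) v = scal c v + scal d v"
  by (rule poly_mapping_eqI) (simp add: lookup_add distrib_right)

lemma scal_sum_right: "scal c (sum f S) = (\<Sum>a\<in>S. scal c (f a))"
  by (induction S rule: infinite_finite_induct) (auto simp: scal_add_right)

lemma scal_sum_left: "scal (sum g S) w = (\<Sum>a\<in>S. scal (g a) w)"
  by (induction S rule: infinite_finite_induct) (auto simp: scal_add_left)

lemma keys_scal: "Poly_Mapping.keys (scal c v) \<subseteq> Poly_Mapping.keys v"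
  by (auto simp: in_keys_iff)

lemma lin_eq_sum_superset:
  assumes "finite S" "Poly_Mapping.keys v \<subseteq> S"
  shows "lin f v = (\<Sum>a\<in>S. scal (Poly_Mapping.lookup v a) (f a))"
  unfolding lin_def
  by (rule sum.mono_neutral_left) (use assms in \<open>auto simp: in_keys_iff\<close>)

lemma lin_add: "lin f (v + w) = lin f v + lin f w"
proof -
  let ?S = "Poly_Mapping.keys v \<union> Poly_Mapping.keys w"
  have "lin f (v + w) = (\<Sum>a\<in>?S. scal (Poly_Mapping.lookup (v + w) a) (f a))"
    by (rule lin_eq_sum_superset) (auto simp: keys_add)
  also have "\<dots> = (\<Sum>a\<in>?S. scal (Poly_Mapping.lookup v a) (f a))
                  + (\<Sum>a\<in>?S. scal (Poly_Mapping.lookup w a) (f a))"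
    by (simp add: lookup_add scal_add_left sum.distrib)
  also have "\<dots> = lin f v + lin f w"
    by (subst (1 2) lin_eq_sum_superset[where S = ?S]) auto
  finally show ?thesis .
qed

lemma lin_scal: "lin f (scal c v) = scal c (lin f v)"
  by (subst (1 2) lin_eq_sum_superset[where S = "Poly_Mapping.keys v"])
    (auto simp: keys_scal scal_sum_right)

lemma lin_zero [simp]: "lin f 0 = 0"
  by (simp add: lin_def)

lemma lin_sum: "lin f (sum g S) = (\<Sum>i\<in>S. lin f (g i))"
  by (induction S rule: infinite_finite_induct) (auto simp: lin_add)

lemma lin_bas [simp]: "lin f (bas a) = f a"
  by (simp add: lin_def bas_def)

lemma lin_lin: "lin g (lin f v) = lin (\<lambda>a. lin g (f a)) v"
  by (simp add: lin_def[of f] lin_sum lin_scal) (simp add: lin_def)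

lemma lin_scal_fun: "lin (\<lambda>a. scal c (f a)) v = scal c (lin f v)"
  by (simp add: lin_def scal_sum_right mult.commute)

lemma lin_scal_fun_pair: "lin (\<lambda>(x,y). scal c (F x y)) v = scal c (lin (\<lambda>(x,y). F x y) v)"
  using lin_scal_fun[of c "\<lambda>p. F (fst p) (snd p)" v] by (simp add: split_def)

lemma lfun_bas [simp]: "lfun f (bas a) = f a"
  by (simp add: lfun_def bas_def)

lemma lin_scal_lfun: "lin (\<lambda>c. scal (f c) w) v = scal (lfun f v) w"
  by (simp add: lin_def lfun_def scal_sum_left)

lemma lin_bas_id [simp]: "lin bas v = v"
proof (rule poly_mapping_eqI)
  fix b
  have "Poly_Mapping.lookup (lin bas v) b
      = (\<Sum>a\<in>Poly_Mapping.keys v. Poly_Mapping.lookup v a * (if a = b then 1 else 0))"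
    by (simp add: lin_def lookup_sum bas_def lookup_single when_def eq_commute)
  also have "\<dots> = Poly_Mapping.lookup v b"
    by (simp add: if_distrib sum.delta in_keys_iff cong: if_cong)
  finally show "Poly_Mapping.lookup (lin bas v) b = Poly_Mapping.lookup v b" .
qed

lemma lin_swap: "lin (\<lambda>a. lin (\<lambda>b. F a b) w) v = lin (\<lambda>b. lin (\<lambda>a. F a b) v) w"
  by (simp add: lin_def lin_sum lin_scal scal_sum_right sum.swap[of _ "Poly_Mapping.keys v"])
    (simp add: mult.commute)

lemma tens_bas [simp]: "tens (bas a) (bas b) = bas (a,b)"
  by (simp add: tens_def)

lemma lin_tens: "lin F (tens v w) = lin (\<lambda>a. lin (\<lambda>b. F (a,b)) w) v"
  by (simp add: tens_def lin_lin)

lemma tens_lin_left: "tens (lin f v) w = lin (\<lambda>a. tens (f a) w) v"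
  by (simp add: tens_def lin_lin)

lemma tens_lin_right: "tens v (lin f w) = lin (\<lambda>b. tens v (f b)) w"
  by (simp add: tens_def lin_lin) (subst lin_swap, simp)

lemma tens_lin_lin: "tens (lin f u) (lin g v) = lin (\<lambda>a. lin (\<lambda>b. tens (f a) (g b)) v) u"
  by (subst tens_lin_left) (simp only: tens_lin_right)

text \<open>The multiplication is only required to be linear in its first argument;
  linearity in the second one follows by commutativity.\<close>

locale comm_alg =
  fixes mul :: "('a,'k::field) vec \<Rightarrow> ('a,'k) vec \<Rightarrow> ('a,'k) vec" and one :: "('a,'k) vec"
  assumes mul_add: "mul (x + y) z = mul x z + mul y z"
    and mul_scal_left: "mul (scal c x) y = scal c (mul x y)"
    and assoc: "mul (mul x y) z = mul x (mul y z)"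
    and comm: "mul x y = mul y x"
    and one_left: "mul one x = x"
begin

lemma one_right: "mul x one = x"
  using one_left comm by metis

lemma left_commute: "mul x (mul y z) = mul y (mul x z)"
  by (metis assoc comm)

lemmas mul_ac = assoc comm left_commute

lemma mul_scal_right: "mul y (scal c x) = scal c (mul y x)"
  using mul_scal_left comm by metis

lemma mul_zero_left [simp]: "mul 0 x = 0"
  using mul_scal_left[of 0 0 x] by simp

lemma mul_sum: "mul (sum f S) w = (\<Sum>a\<in>S. mul (f a) w)"
  by (induction S rule: infinite_finite_induct) (auto simp: mul_add)

lemma mul_lin_left: "mul (lin f v) w = lin (\<lambda>a. mul (f a) w) v"
  by (simp add: lin_def mul_sum mul_scal_left)

lemma mul_lin_right: "mul w (lin f v) = lin (\<lambda>a. mul w (f a)) v"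
  using mul_lin_left[of f v w] by (simp add: comm)

lemma mul_lin_lin: "mul (lin f u) (lin g v) = lin (\<lambda>a. lin (\<lambda>b. mul (f a) (g b)) v) u"
  by (subst mul_lin_left) (simp only: mul_lin_right)

lemma mul_expand: "mul u v = lin (\<lambda>a. lin (\<lambda>b. mul (bas a) (bas b)) v) u"
  using mul_lin_lin[of bas u bas v] by simp

lemma lin_mul_bas: "lin (\<lambda>b. mul u (bas b)) v = mul u v"
  using mul_lin_right[of u bas v] by simp

lemma lin_mul_tens: "lin (\<lambda>(x,y). mul (p x) (q y)) (tens u v) = mul (lin p u) (lin q v)"
  by (simp add: lin_tens mul_lin_lin)

lemma lin_mul_tens': "lin (\<lambda>z. mul (p (fst z)) (q (snd z))) (tens u v) = mul (lin p u) (lin q v)"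
  using lin_mul_tens[of p q u v] by (simp add: split_def)

lemma lin_mul3_tens':
  "lin (\<lambda>z. mul (x (fst z)) (mul (y (fst (snd z))) (h (snd (snd z))))) (tens U (tens V W))
   = mul (lin x U) (mul (lin y V) (lin h W))"
  by (simp add: lin_tens split_def, simp only: mul_lin_left, simp only: mul_lin_right)

end

lemma comm_alg_mulv:
  assumes "comm_hopf X"
  shows "comm_alg (mulv X) (hone X)"
proof
  note ax = assms[unfolded comm_hopf_def is_hopf_def]
  show "mulv X (x + y) z = mulv X x z + mulv X y z" for x y z
    by (simp add: mulv_def lin_add)
  show "mulv X (scal c x) y = scal c (mulv X x y)" for c x y
    by (simp add: mulv_def lin_scal)
  show "mulv X (mulv X x y) z = mulv X x (mulv X y z)" for x y z
    using ax by blast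
  show "mulv X x y = mulv X y x" for x y
    using ax by blast
  show "mulv X (hone X) x = x" for x
    using ax by blast
qed

definition tens_alg ::
    "(('a,'k::field) vec \<Rightarrow> ('a,'k) vec \<Rightarrow> ('a,'k) vec) \<Rightarrow> (('b,'k) vec \<Rightarrow> ('b,'k) vec \<Rightarrow> ('b,'k) vec) \<Rightarrow>
     ('a \<times> 'b,'k) vec \<Rightarrow> ('a \<times> 'b,'k) vec \<Rightarrow> ('a \<times> 'b,'k) vec" where
  "tens_alg m1 m2 u v =
     lin (\<lambda>(a,b). lin (\<lambda>(c,d). tens (m1 (bas a) (bas c)) (m2 (bas b) (bas d))) v) u"

lemma tens_alg_lin_left: "tens_alg m1 m2 (lin f u) v = lin (\<lambda>a. tens_alg m1 m2 (f a) v) u"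
  by (simp add: tens_alg_def lin_lin)

lemma tens_alg_lin_right: "tens_alg m1 m2 u (lin f v) = lin (\<lambda>a. tens_alg m1 m2 u (f a)) v"
  unfolding tens_alg_def by (simp add: lin_lin split_def) (rule lin_swap)

lemma tens_alg_expand: "tens_alg m1 m2 x y = lin (\<lambda>p. lin (\<lambda>q. tens_alg m1 m2 (bas p) (bas q)) y) x"
  using tens_alg_lin_left[of m1 m2 bas x y] tens_alg_lin_right[of m1 m2 _ bas y] by simp

lemma tens_alg_bas:
  "tens_alg m1 m2 (bas (a,b)) (bas (c,d)) = tens (m1 (bas a) (bas c)) (m2 (bas b) (bas d))"
  by (simp add: tens_alg_def)

context
  fixes m1 :: "('a,'k::field) vec \<Rightarrow> ('a,'k) vec \<Rightarrow> ('a,'k) vec" and o1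
    and m2 :: "('b,'k::field) vec \<Rightarrow> ('b,'k) vec \<Rightarrow> ('b,'k) vec" and o2
  assumes A1: "comm_alg m1 o1" and A2: "comm_alg m2 o2"
begin

lemma tens_alg_tens: "tens_alg m1 m2 (tens u1 u2) (tens v1 v2) = tens (m1 u1 v1) (m2 u2 v2)"
  by (subst comm_alg.mul_expand[OF A1], subst comm_alg.mul_expand[OF A2])
    (simp add: tens_lin_lin tens_alg_def lin_tens)

lemma comm_alg_tens_alg: "comm_alg (tens_alg m1 m2) (tens o1 o2)"
proof
  show "tens_alg m1 m2 (x + y) z = tens_alg m1 m2 x z + tens_alg m1 m2 y z" for x y z
    by (simp add: tens_alg_def lin_add)
  show "tens_alg m1 m2 (scal c x) y = scal c (tens_alg m1 m2 x y)" for c x y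
    by (simp add: tens_alg_def lin_scal)
  show "tens_alg m1 m2 (tens_alg m1 m2 x y) z = tens_alg m1 m2 x (tens_alg m1 m2 y z)" for x y z
  proof -
    have "tens_alg m1 m2 (tens_alg m1 m2 (bas p) (bas q)) (bas r)
        = tens_alg m1 m2 (bas p) (tens_alg m1 m2 (bas q) (bas r))" for p q r
      by (cases p; cases q; cases r)
        (simp only: tens_bas[symmetric] tens_alg_tens comm_alg.assoc[OF A1] comm_alg.assoc[OF A2])
    then show ?thesis
      by (subst (1 2) lin_bas_id[symmetric, of x], subst (1 2) lin_bas_id[symmetric, of y],
          subst (1 2) lin_bas_id[symmetric, of z])
        (simp only: tens_alg_lin_left tens_alg_lin_right lin_lin lin_bas)
  qed
  show "tens_alg m1 m2 x y = tens_alg m1 m2 y x" for x y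
  proof -
    have "tens_alg m1 m2 (bas p) (bas q) = tens_alg m1 m2 (bas q) (bas p)" for p q
      by (cases p; cases q) (simp only: tens_alg_bas, metis comm_alg.comm A1 A2)
    then show ?thesis
      by (subst (1 2) tens_alg_expand) (subst lin_swap, simp only:)
  qed
  show "tens_alg m1 m2 (tens o1 o2) x = x" for x
  proof -
    have "tens_alg m1 m2 (tens o1 o2) (bas p) = bas p" for p
      by (cases p) (simp only: tens_bas[symmetric] tens_alg_tens comm_alg.one_left[OF A1]
          comm_alg.one_left[OF A2])
    then show ?thesis
      by (subst (1 2) lin_bas_id[symmetric, of x]) (simp only: tens_alg_lin_right lin_bas)
  qed
qed

end

locale commutative_hopf =
  fixes X :: "('b,'k::field) hopf"
  assumes hopf_ax: "comm_hopf X"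
begin

lemma mult_one: "mulv X (hone X) x = x" "mulv X x (hone X) = x"
  using hopf_ax unfolding comm_hopf_def is_hopf_def by blast+

lemma coassoc_vec:
  "lin (\<lambda>(a,b). lin (\<lambda>(a1,a2). bas (a1,(a2,b))) (hcomult X a)) (comv X x) = com2 X x"
  using hopf_ax unfolding comm_hopf_def is_hopf_def by blast

lemma counit_vec:
  "lin (\<lambda>(a,b). scal (hcounit X a) (bas b)) (comv X x) = x"
  "lin (\<lambda>(a,b). scal (hcounit X b) (bas a)) (comv X x) = x"
  using hopf_ax unfolding comm_hopf_def is_hopf_def by blast+

lemma comult_mulv: "comv X (mulv X x y) = tprod X X (comv X x) (comv X y)"
  using hopf_ax unfolding comm_hopf_def is_hopf_def by blast

lemma comult_one: "comv X (hone X) = tens (hone X) (hone X)"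
  using hopf_ax unfolding comm_hopf_def is_hopf_def by blast

lemma counit_mulv: "cou X (mulv X x y) = cou X x * cou X y" "cou X (hone X) = 1"
  using hopf_ax unfolding comm_hopf_def is_hopf_def by blast+

lemma antipode_vec:
  "lin (\<lambda>(a,b). mulv X (hantipode X a) (bas b)) (comv X x) = scal (cou X x) (hone X)"
  "lin (\<lambda>(a,b). mulv X (bas a) (hantipode X b)) (comv X x) = scal (cou X x) (hone X)"
  using hopf_ax unfolding comm_hopf_def is_hopf_def by blast+

sublocale A: comm_alg "mulv X" "hone X"
  by (rule comm_alg_mulv[OF hopf_ax])

lemma coassoc:
  "lin (\<lambda>(a,b). lin (\<lambda>(a1,a2). G a1 a2 b) (hcomult X a)) (hcomult X c) =
   lin (\<lambda>(a,b). lin (\<lambda>(b1,b2). G a b1 b2) (hcomult X b)) (hcomult X c)"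
proof -
  have "lin (\<lambda>(u,v,w). G u v w)
          (lin (\<lambda>(a,b). lin (\<lambda>(a1,a2). bas (a1,(a2,b))) (hcomult X a)) (comv X (bas c)))
      = lin (\<lambda>(u,v,w). G u v w) (com2 X (bas c))"
    by (simp only: coassoc_vec)
  then show ?thesis
    by (simp add: com2_def comv_def lin_lin split_def)
qed

lemma counit_left: "lin (\<lambda>(a,b). scal (hcounit X a) (G b)) (hcomult X c) = G c"
proof -
  have "lin G (lin (\<lambda>(a,b). scal (hcounit X a) (bas b)) (comv X (bas c))) = lin G (bas c)"
    by (simp only: counit_vec)
  then show ?thesis
    by (simp add: comv_def lin_lin split_def lin_scal)
qed

lemma counit_right: "lin (\<lambda>(a,b). scal (hcounit X b) (G a)) (hcomult X c) = G c"
proof -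
  have "lin G (lin (\<lambda>(a,b). scal (hcounit X b) (bas a)) (comv X (bas c))) = lin G (bas c)"
    by (simp only: counit_vec)
  then show ?thesis
    by (simp add: comv_def lin_lin split_def lin_scal)
qed

lemma cou_bas [simp]: "cou X (bas c) = hcounit X c"
  by (simp add: cou_def)

lemma antipode_left:
  "lin (\<lambda>(a,b). mulv X (hantipode X a) (bas b)) (hcomult X c) = scal (hcounit X c) (hone X)"
  using antipode_vec(1)[of "bas c"] by (simp add: comv_def)

lemma antipode_right:
  "lin (\<lambda>(a,b). mulv X (bas a) (hantipode X b)) (hcomult X c) = scal (hcounit X c) (hone X)"
  using antipode_vec(2)[of "bas c"] by (simp add: comv_def)

lemma comult_hmult: "lin (hcomult X) (hmult X a b) = tprod X X (hcomult X a) (hcomult X b)"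
  using comult_mulv[of "bas a" "bas b"] by (simp add: comv_def mulv_def)

lemma counit_hmult: "lfun (hcounit X) (hmult X a b) = hcounit X a * hcounit X b"
  using counit_mulv(1)[of "bas a" "bas b"] by (simp add: cou_def mulv_def)

lemma mult_conv_mult_antipode:
  "lin (\<lambda>(x,y). lin (\<lambda>(z,w). mulv X (hmult X x z) (mulv X (hantipode X y) (hantipode X w)))
      (hcomult X b)) (hcomult X a)
   = scal (hcounit X a) (scal (hcounit X b) (hone X))"
proof -
  have "hmult X x z = mulv X (bas x) (bas z)" for x z
    by (simp add: mulv_def)
  then have "lin (\<lambda>(x,y). lin (\<lambda>(z,w). mulv X (hmult X x z)
        (mulv X (hantipode X y) (hantipode X w)))
      (hcomult X b)) (hcomult X a)
    = mulv X (lin (\<lambda>(x,y). mulv X (bas x) (hantipode X y)) (hcomult X a))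
             (lin (\<lambda>(z,w). mulv X (bas z) (hantipode X w)) (hcomult X b))"
    by (simp add: A.mul_ac A.mul_lin_lin split_def)
  then show ?thesis
    by (simp add: antipode_right A.mul_scal_left A.mul_scal_right A.one_left mult.commute)
qed

lemma antipode_mult_conv_mult:
  "lin (\<lambda>(x,y). lin (\<lambda>(z,w). mulv X (lin (hantipode X) (hmult X x z)) (hmult X y w))
      (hcomult X b)) (hcomult X a)
   = scal (hcounit X a) (scal (hcounit X b) (hone X))"
proof -
  have "lin (\<lambda>(x,y). lin (\<lambda>(z,w). mulv X (lin (hantipode X) (hmult X x z)) (hmult X y w))
      (hcomult X b)) (hcomult X a)
     = lin (\<lambda>(u,v). mulv X (hantipode X u) (bas v)) (lin (hcomult X) (hmult X a b))"
    by (simp add: comult_hmult tprod_def lin_lin lin_tens split_def A.mul_lin_left A.lin_mul_bas)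
  also have "\<dots> = scal (hcounit X a) (scal (hcounit X b) (hone X))"
    by (simp add: lin_lin antipode_left lin_scal_lfun counit_hmult)
  finally show ?thesis .
qed

text \<open>Both sides are convolution inverses of the multiplication in \<open>Hom(X \<otimes> X, X)\<close>:
  \<open>S \<circ> m = (S \<circ> m) \<star> (m \<star> m \<circ> (S \<otimes> S)) = ((S \<circ> m) \<star> m) \<star> m \<circ> (S \<otimes> S) = m \<circ> (S \<otimes> S)\<close>.\<close>

lemma antipode_hmult: "lin (hantipode X) (hmult X a b) = mulv X (hantipode X a) (hantipode X b)"
proof -
  let ?D = "hcomult X" and ?m = "mulv X" and ?S = "hantipode X" and ?Sv = "lin (hantipode X)"
  let ?F = "\<lambda>a1 x y b1 z w. ?m (?Sv (hmult X a1 b1)) (?m (hmult X x z) (?m (?S y) (?S w)))"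
  have "?Sv (hmult X a b) = lin (\<lambda>(a1,a2). lin (\<lambda>(b1,b2). ?m (?Sv (hmult X a1 b1))
      (lin (\<lambda>(x,y). lin (\<lambda>(z,w). ?m (hmult X x z) (?m (?S y) (?S w)))
          (?D b2)) (?D a2))) (?D b)) (?D a)"
    by (simp add: mult_conv_mult_antipode A.mul_scal_right A.one_right lin_scal_fun_pair
        counit_right
        del: scal_scal)
  also have "\<dots> = lin (\<lambda>(a1,a2). lin (\<lambda>(x,y). lin (\<lambda>(b1,b2). lin (\<lambda>(z,w).
      ?F a1 x y b1 z w) (?D b2)) (?D b)) (?D a2)) (?D a)"
    by (simp add: A.mul_lin_right split_def lin_swap[of _ "?D b"])
  also have "\<dots> = lin (\<lambda>(p,y). lin (\<lambda>(a1,x). lin (\<lambda>(q,w). lin (\<lambda>(b1,z).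
      ?F a1 x y b1 z w) (?D q)) (?D b)) (?D p)) (?D a)"
    by (subst coassoc[symmetric], subst coassoc[symmetric], rule refl)
  also have "\<dots> = lin (\<lambda>(p,y). lin (\<lambda>(q,w). ?m (lin (\<lambda>(x,y). lin (\<lambda>(z,w).
      ?m (?Sv (hmult X x z)) (hmult X y w)) (?D q)) (?D p)) (?m (?S y) (?S w))) (?D b)) (?D a)"
    by (simp add: A.mul_lin_left A.mul_lin_right A.mul_ac split_def lin_swap[of _ "?D b"])
  also have "\<dots> = ?m (?S a) (?S b)"
    by (simp add: antipode_mult_conv_mult A.mul_scal_left A.one_left lin_scal_fun_pair counit_left
        del: scal_scal)
  finally show ?thesis .
qed

lemma antv_bas [simp]: "antv X (bas a) = hantipode X a"
  by (simp add: antv_def)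

lemma antv_mulv: "antv X (mulv X u v) = mulv X (antv X u) (antv X v)"
proof -
  have "antv X (mulv X u v) = lin (\<lambda>a. lin (\<lambda>b. lin (hantipode X) (hmult X a b)) v) u"
    by (simp add: antv_def mulv_def lin_lin)
  also have "\<dots> = mulv X (antv X u) (antv X v)"
    by (simp add: antipode_hmult antv_def A.mul_lin_left A.mul_lin_right) (rule lin_swap)
  finally show ?thesis .
qed

lemma antv_one: "antv X (hone X) = hone X"
  using antipode_vec(1)[of "hone X"]
  by (simp add: comult_one counit_mulv lin_tens A.lin_mul_bas A.one_right antv_def)

end

section \<open>The group of algebra-valued points of a commutative Hopf algebra\<close>

text \<open>A point of \<open>X\<close> in a commutative algebra \<open>A = (m, one)\<close> is a linear map \<open>X \<rightarrow> A\<close>,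
  given on the basis; the algebra maps among them form the group.\<close>

definition convol :: "('b,'k::field) hopf \<Rightarrow> (('a,'k) vec \<Rightarrow> ('a,'k) vec \<Rightarrow> ('a,'k) vec) \<Rightarrow>
    ('b \<Rightarrow> ('a,'k) vec) \<Rightarrow> ('b \<Rightarrow> ('a,'k) vec) \<Rightarrow> 'b \<Rightarrow> ('a,'k) vec" where
  "convol X m p q c = lin (\<lambda>(a,b). m (p a) (q b)) (hcomult X c)"

definition conv_unit :: "('b,'k::field) hopf \<Rightarrow> ('a,'k) vec \<Rightarrow> 'b \<Rightarrow> ('a,'k) vec" where
  "conv_unit X one c = scal (hcounit X c) one"

definition conv_inv :: "('b,'k::field) hopf \<Rightarrow> ('b \<Rightarrow> ('a,'k) vec) \<Rightarrow> 'b \<Rightarrow> ('a,'k) vec" where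
  "conv_inv X p c = lin p (hantipode X c)"

definition alg_map :: "('b,'k::field) hopf \<Rightarrow> (('a,'k) vec \<Rightarrow> ('a,'k) vec \<Rightarrow> ('a,'k) vec) \<Rightarrow>
    ('a,'k) vec \<Rightarrow> ('b \<Rightarrow> ('a,'k) vec) \<Rightarrow> bool" where
  "alg_map X m one p \<longleftrightarrow> (\<forall>a b. lin p (hmult X a b) = m (p a) (p b)) \<and> lin p (hone X) = one"

definition lcomp :: "('b \<Rightarrow> ('a,'k::field) vec) \<Rightarrow> ('c \<Rightarrow> ('b,'k) vec) \<Rightarrow> 'c \<Rightarrow> ('a,'k) vec" where
  "lcomp p T c = lin p (T c)"

lemma convol_fun: "convol X m p q = (\<lambda>c. lin (\<lambda>(a,b). m (p a) (q b)) (hcomult X c))"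
  by (rule ext) (simp add: convol_def)

lemma conv_unit_fun: "conv_unit X one = (\<lambda>c. scal (hcounit X c) one)"
  by (rule ext) (simp add: conv_unit_def)

lemma conv_inv_fun: "conv_inv X p = (\<lambda>c. lin p (hantipode X c))"
  by (rule ext) (simp add: conv_inv_def)

lemma lcomp_fun: "lcomp p T = (\<lambda>c. lin p (T c))"
  by (rule ext) (simp add: lcomp_def)

lemma lin_lcomp: "lin (lcomp p T) v = lin p (lin T v)"
  by (simp add: lcomp_fun lin_lin)

lemma lcomp_bas: "lcomp bas T = T"
  by (rule ext) (simp add: lcomp_def)

lemma alg_map_mulv:
  assumes "comm_alg m one" "alg_map X m one p"
  shows "lin p (mulv X u v) = m (lin p u) (lin p v)"
  using assms unfolding alg_map_def mulv_def
  by (simp add: lin_lin comm_alg.mul_lin_lin[OF assms(1)])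

lemma alg_map_one: "alg_map X m one p \<Longrightarrow> lin p (hone X) = one"
  by (simp add: alg_map_def)

lemma alg_map_bas: "alg_map X (mulv X) (hone X) bas"
  by (simp add: alg_map_def mulv_def)

lemma alg_map_lcomp:
  assumes "comm_alg m one" "alg_map X m one p"
    and "\<forall>u v. lin T (mulv X u v) = mulv X (lin T u) (lin T v)" "lin T (hone X) = hone X"
  shows "alg_map X m one (lcomp p T)"
proof -
  have "lin (lcomp p T) (hmult X a b) = m (lcomp p T a) (lcomp p T b)" for a b
    using assms(3)[rule_format, of "bas a" "bas b"]
    by (simp add: lin_lcomp mulv_def[of X "bas a"] alg_map_mulv[OF assms(1,2)] lcomp_def)
  then show ?thesis
    using assms(4) by (simp add: alg_map_def lin_lcomp alg_map_one[OF assms(2)])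
qed

locale points = commutative_hopf X + M: comm_alg m one
  for X :: "('b,'k::field) hopf" and m :: "('a,'k) vec \<Rightarrow> ('a,'k) vec \<Rightarrow> ('a,'k) vec" and one
begin

abbreviation conv where "conv \<equiv> convol X m"
abbreviation eps where "eps \<equiv> conv_unit X one"
abbreviation cinv :: "('b \<Rightarrow> ('a,'k) vec) \<Rightarrow> 'b \<Rightarrow> ('a,'k) vec" where "cinv \<equiv> conv_inv X"
abbreviation alg where "alg \<equiv> alg_map X m one"

lemma alg_mulv: "alg p \<Longrightarrow> lin p (mulv X u v) = m (lin p u) (lin p v)"
  by (rule alg_map_mulv[OF M.comm_alg_axioms])

lemma alg_one: "alg p \<Longrightarrow> lin p (hone X) = one"
  by (rule alg_map_one)

lemma alg_hmult: "alg p \<Longrightarrow> lin p (hmult X a b) = m (p a) (p b)"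
  by (simp add: alg_map_def)

lemma lin_cinv: "lin (cinv p) w = lin p (antv X w)"
  by (simp add: conv_inv_fun antv_def lin_lin)

lemma lin_conv: "lin (conv p q) v = lin (\<lambda>(a,b). m (p a) (q b)) (comv X v)"
  by (simp add: convol_fun comv_def lin_lin)

lemma conv_assoc: "conv (conv p q) r = conv p (conv q r)"
proof
  fix c
  have "conv (conv p q) r c
      = lin (\<lambda>(a,b). lin (\<lambda>(a1,a2). m (m (p a1) (q a2)) (r b)) (hcomult X a)) (hcomult X c)"
    by (simp add: convol_def M.mul_lin_left split_def)
  also have "\<dots> = lin (\<lambda>(a,b). lin (\<lambda>(b1,b2). m (m (p a) (q b1)) (r b2))
        (hcomult X b)) (hcomult X c)"
    by (rule coassoc)
  also have "\<dots> = conv p (conv q r) c"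
    by (simp add: convol_def M.mul_lin_right M.assoc split_def)
  finally show "conv (conv p q) r c = conv p (conv q r) c" .
qed

lemma conv_eps_left [simp]: "conv eps p = p"
  by (rule ext) (simp add: convol_def conv_unit_def M.mul_scal_left M.one_left counit_left)

lemma conv_eps_right [simp]: "conv p eps = p"
  by (rule ext) (simp add: convol_def conv_unit_def M.mul_scal_right M.one_right counit_right)

lemma conv_cinv_right:
  assumes "alg p"
  shows "conv p (cinv p) = eps"
proof
  fix c
  have "conv p (cinv p) c = lin p (lin (\<lambda>(a,b). mulv X (bas a) (hantipode X b)) (hcomult X c))"
    by (simp add: convol_def conv_inv_def lin_lin split_def alg_mulv[OF assms])
  then show "conv p (cinv p) c = eps c"
    by (simp add: antipode_right lin_scal alg_one[OF assms] conv_unit_def)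
qed

lemma conv_cinv_left:
  assumes "alg p"
  shows "conv (cinv p) p = eps"
proof
  fix c
  have "conv (cinv p) p c = lin p (lin (\<lambda>(a,b). mulv X (hantipode X a) (bas b)) (hcomult X c))"
    by (simp add: convol_def conv_inv_def lin_lin split_def alg_mulv[OF assms])
  then show "conv (cinv p) p c = eps c"
    by (simp add: antipode_left lin_scal alg_one[OF assms] conv_unit_def)
qed

lemma alg_eps: "alg eps"
  using counit_hmult counit_mulv(2)
  by (simp add: alg_map_def conv_unit_fun lin_scal_lfun M.mul_scal_left M.mul_scal_right M.one_left
      mult.commute cou_def)

lemma alg_conv:
  assumes "alg p" "alg q"
  shows "alg (conv p q)"
proof -
  have "lin (conv p q) (hmult X a b) = m (conv p q a) (conv p q b)" for a b
  proof -
    have "lin (conv p q) (hmult X a b) = lin (\<lambda>(x,y). m (p x) (q y))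
        (lin (hcomult X) (hmult X a b))"
      by (simp add: convol_fun lin_lin)
    also have "\<dots> = lin (\<lambda>(x,y). lin (\<lambda>(z,w). m (m (p x) (p z)) (m (q y) (q w)))
        (hcomult X b)) (hcomult X a)"
      by (simp add: comult_hmult tprod_def lin_lin M.lin_mul_tens' split_def alg_hmult assms)
    also have "\<dots> = m (conv p q a) (conv p q b)"
      by (simp add: convol_def M.mul_lin_lin split_def M.mul_ac)
    finally show ?thesis .
  qed
  moreover have "lin (conv p q) (hone X) = one"
    by (simp add: lin_conv comult_one M.lin_mul_tens alg_one assms M.one_left)
  ultimately show ?thesis
    by (simp add: alg_map_def)
qed

lemma alg_cinv:
  assumes "alg p"
  shows "alg (cinv p)"
proof -
  have "lin (cinv p) (hmult X a b) = m (cinv p a) (cinv p b)" for a b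
    using antv_mulv[of "bas a" "bas b"]
    by (simp add: lin_cinv mulv_def[of X "bas a"] alg_mulv assms conv_inv_def)
  moreover have "lin (cinv p) (hone X) = one"
    by (simp add: lin_cinv antv_one alg_one assms)
  ultimately show ?thesis
    by (simp add: alg_map_def)
qed

lemma cinv_unique:
  assumes "alg p" "conv p q = eps"
  shows "q = cinv p"
proof -
  have "q = conv (conv (cinv p) p) q"
    using conv_cinv_left[OF assms(1)] by simp
  also have "\<dots> = cinv p"
    by (simp add: conv_assoc assms)
  finally show ?thesis .
qed

lemma cinv_conv:
  assumes "alg p" "alg q"
  shows "cinv (conv p q) = conv (cinv q) (cinv p)"
proof -
  have "conv (conv p q) (conv (cinv q) (cinv p)) = eps"
    by (simp add: conv_assoc[symmetric]) (simp add: conv_assoc conv_cinv_right assms)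
  then show ?thesis
    using cinv_unique alg_conv assms by metis
qed

lemma cinv_cinv: "alg p \<Longrightarrow> cinv (cinv p) = p"
  using cinv_unique[OF alg_cinv conv_cinv_left] by simp

lemma cinv_eps: "cinv eps = eps"
  using cinv_unique[OF alg_eps, of eps] by simp

lemma conv_cinv_cancel: "alg p \<Longrightarrow> conv p (conv (cinv p) q) = q"
  by (simp add: conv_assoc[symmetric] conv_cinv_right)

lemma cinv_conv_cancel: "alg p \<Longrightarrow> conv (cinv p) (conv p q) = q"
  by (simp add: conv_assoc[symmetric] conv_cinv_left)

end

section \<open>Rota-Baxter co-operators tested on points\<close>

definition alg_endo :: "('b,'k::field) hopf \<Rightarrow> ('b \<Rightarrow> ('b,'k) vec) \<Rightarrow> bool" where
  "alg_endo X T \<longleftrightarrow>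
     (\<forall>x y. lin T (mulv X x y) = mulv X (lin T x) (lin T y)) \<and> lin T (hone X) = hone X"

definition rb_lhs ::
    "('b,'k::field) hopf \<Rightarrow> ('b \<Rightarrow> ('b,'k) vec) \<Rightarrow> ('b,'k) vec \<Rightarrow> ('b \<times> 'b,'k) vec" where
  "rb_lhs X T v = lin (\<lambda>(a,b). tens (T a) (T b)) (comv X v)"

definition rb_rhs ::
    "('b,'k::field) hopf \<Rightarrow> ('b \<Rightarrow> ('b,'k) vec) \<Rightarrow> ('b,'k) vec \<Rightarrow> ('b \<times> 'b,'k) vec" where
  "rb_rhs X T v =
     lin (\<lambda>(a,(b,(c,d))). tens (mulv X (bas a) (lin T (mulv X (bas b) (hantipode X d)))) (bas c))
       (com3 X (lin T v))"

lemma rb_coop_iff: "rb_coop X T \<longleftrightarrow> alg_endo X T \<and> (\<forall>v. rb_lhs X T v = rb_rhs X T v)"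
  unfolding rb_coop_def alg_endo_def rb_lhs_def rb_rhs_def by blast

lemma rb_lhs_lin: "rb_lhs X T v = lin (\<lambda>c. rb_lhs X T (bas c)) v"
  by (simp add: rb_lhs_def comv_def lin_lin)

lemma rb_rhs_lin: "rb_rhs X T v = lin (\<lambda>c. rb_rhs X T (bas c)) v"
  by (simp add: rb_rhs_def com3_def comv_def lin_lin)

text \<open>The two sides of the Rota-Baxter identity paired with points \<open>a, b\<close>: on algebra maps
  it reads \<open>(a \<circ> T) \<star> (b \<circ> T) = (a \<star> (a \<circ> T) \<star> b \<star> (a \<circ> T)\<inverse>) \<circ> T\<close>, the defining identity
  of a Rota-Baxter operator on a group.\<close>

definition rb_lhs_pt :: "('b,'k::field) hopf \<Rightarrow> (('a,'k) vec \<Rightarrow> ('a,'k) vec \<Rightarrow> ('a,'k) vec) \<Rightarrow>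
    ('b \<Rightarrow> ('a,'k) vec) \<Rightarrow> ('b \<Rightarrow> ('a,'k) vec) \<Rightarrow> ('b \<Rightarrow> ('b,'k) vec) \<Rightarrow> 'b \<Rightarrow> ('a,'k) vec" where
  "rb_lhs_pt X m a b T = convol X m (lcomp a T) (lcomp b T)"

definition rb_rhs_pt :: "('b,'k::field) hopf \<Rightarrow> (('a,'k) vec \<Rightarrow> ('a,'k) vec \<Rightarrow> ('a,'k) vec) \<Rightarrow>
    ('b \<Rightarrow> ('a,'k) vec) \<Rightarrow> ('b \<Rightarrow> ('a,'k) vec) \<Rightarrow> ('b \<Rightarrow> ('b,'k) vec) \<Rightarrow> 'b \<Rightarrow> ('a,'k) vec" where
  "rb_rhs_pt X m a b T =
     lcomp (convol X m a (convol X m (lcomp a T) (convol X m b (conv_inv X (lcomp a T))))) T"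

lemma lin_rb_lhs:
  assumes "comm_alg m one"
  shows "lin (\<lambda>(p,q). m (a p) (b q)) (rb_lhs X T (bas c)) = rb_lhs_pt X m a b T c"
  unfolding rb_lhs_def rb_lhs_pt_def
  by (simp add: comv_def lin_lin split_def comm_alg.lin_mul_tens'[OF assms] convol_def lcomp_def)

lemma lin_rb_rhs:
  assumes CA: "comm_alg m one" and a: "alg_map X m one a" and T: "alg_endo X T"
  shows "lin (\<lambda>(p,q). m (a p) (b q)) (rb_rhs X T (bas c)) = rb_rhs_pt X m a b T c"
proof -
  have aT: "alg_map X m one (lcomp a T)"
    using alg_map_lcomp[OF CA a] T by (simp add: alg_endo_def)
  have a_factor: "lin a (mulv X (bas p1) (lin T (mulv X (bas p2) (hantipode X p4)))) =
            m (a p1) (m (lcomp a T p2) (conv_inv X (lcomp a T) p4))" for p1 p2 p4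
    by (simp add: alg_map_mulv[OF CA a] lin_lcomp[symmetric] alg_map_mulv[OF CA aT] conv_inv_def)
  show ?thesis
    unfolding rb_rhs_def rb_rhs_pt_def
    apply (simp add: com3_def com2_def comv_def lin_lin split_def comm_alg.lin_mul_tens'[OF CA]
        a_factor)
    apply (simp only: lcomp_def convol_fun split_def comm_alg.mul_lin_right[OF CA] lin_lin)
    apply (simp add: comm_alg.mul_ac[OF CA])
    done
qed

definition incl_left :: "('b,'k::field) vec \<Rightarrow> 'a \<Rightarrow> ('a \<times> 'b,'k) vec" where
  "incl_left o2 p = tens (bas p) o2"

definition incl_right :: "('a,'k::field) vec \<Rightarrow> 'b \<Rightarrow> ('a \<times> 'b,'k) vec" where
  "incl_right o1 q = tens o1 (bas q)"

context
  fixes m1 :: "('a,'k::field) vec \<Rightarrow> ('a,'k) vec \<Rightarrow> ('a,'k) vec" and o1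
    and m2 :: "('b,'k::field) vec \<Rightarrow> ('b,'k) vec \<Rightarrow> ('b,'k) vec" and o2
  assumes A1: "comm_alg m1 o1" and A2: "comm_alg m2 o2"
begin

text \<open>Pairing with the universal points \<open>incl_left, incl_right\<close> into the algebra \<open>X \<otimes> Y\<close> is the
  identity; this is why identities between vectors can be tested on points.\<close>

lemma lin_tens_alg_incl: "lin (\<lambda>(p,q). tens_alg m1 m2 (incl_left o2 p) (incl_right o1 q)) v = v"
  by (simp add: incl_left_def incl_right_def tens_alg_tens[OF A1 A2] comm_alg.one_left[OF A2]
      comm_alg.one_right[OF A1] split_def)

lemma alg_map_incl_left:
  "m1 = mulv X \<Longrightarrow> o1 = hone X \<Longrightarrow> alg_map X (tens_alg m1 m2) (tens o1 o2) (incl_left o2)"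
  unfolding alg_map_def incl_left_def
  using tens_alg_tens[OF A1 A2] comm_alg.one_left[OF A2, of o2]
  by (simp add: tens_lin_left[symmetric] mulv_def)

lemma alg_map_incl_right:
  "m2 = mulv Y \<Longrightarrow> o2 = hone Y \<Longrightarrow> alg_map Y (tens_alg m1 m2) (tens o1 o2) (incl_right o1)"
  unfolding alg_map_def incl_right_def
  using tens_alg_tens[OF A1 A2] comm_alg.one_left[OF A1, of o1]
  by (simp add: tens_lin_right[symmetric] mulv_def)

lemma alg_map_tens_one_left:
  "alg_map Y m2 o2 q \<Longrightarrow> alg_map Y (tens_alg m1 m2) (tens o1 o2) (\<lambda>v. tens o1 (q v))"
  by (simp add: alg_map_def tens_lin_right[symmetric] tens_alg_tens[OF A1 A2]
      comm_alg.one_left[OF A1])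

end

lemma alg_endo_of_alg_map:
  "comm_alg (mulv X) (hone X) \<Longrightarrow> alg_map X (mulv X) (hone X) T \<Longrightarrow> alg_endo X T"
  by (simp add: alg_endo_def alg_map_mulv alg_map_one)

lemma rb_coop_of_points:
  assumes CX: "comm_alg (mulv X) (hone X)" and T: "alg_endo X T"
    and P: "rb_lhs_pt X (tens_alg (mulv X) (mulv X)) (incl_left (hone X)) (incl_right (hone X)) T =
            rb_rhs_pt X (tens_alg (mulv X) (mulv X)) (incl_left (hone X)) (incl_right (hone X)) T"
  shows "rb_coop X T"
proof -
  have CA: "comm_alg (tens_alg (mulv X) (mulv X)) (tens (hone X) (hone X))"
    by (rule comm_alg_tens_alg[OF CX CX])
  have a1: "alg_map X (tens_alg (mulv X) (mulv X)) (tens (hone X) (hone X)) (incl_left (hone X))"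
    by (rule alg_map_incl_left[OF CX CX]) simp_all
  have "rb_lhs X T (bas c) = rb_rhs X T (bas c)" for c
    using lin_rb_lhs[OF CA, of "incl_left (hone X)" "incl_right (hone X)" X T c]
      lin_rb_rhs[OF CA a1 T, of "incl_right (hone X)" c] P
    by (simp add: lin_tens_alg_incl[OF CX CX])
  then have "rb_lhs X T v = rb_rhs X T v" for v
    by (subst rb_lhs_lin, subst rb_rhs_lin) simp
  with T show ?thesis
    by (simp add: rb_coop_iff)
qed

lemma rb_coop_points:
  assumes "rb_coop X T" "comm_alg m one" "alg_map X m one a"
  shows "rb_lhs_pt X m a b T = rb_rhs_pt X m a b T"
proof
  fix c
  from assms(1) have T: "alg_endo X T" and E: "rb_lhs X T (bas c) = rb_rhs X T (bas c)"
    by (auto simp: rb_coop_iff)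
  show "rb_lhs_pt X m a b T c = rb_rhs_pt X m a b T c"
    using lin_rb_lhs[OF assms(2), of a b X T c] lin_rb_rhs[OF assms(2,3) T, of b c] E by simp
qed

context points
begin

lemma alg_endo_lcomp: "alg_endo X T \<Longrightarrow> alg p \<Longrightarrow> alg (lcomp p T)"
  by (auto simp: alg_endo_def intro: alg_map_lcomp[OF M.comm_alg_axioms])

lemma rb_coop_lcomp: "rb_coop X T \<Longrightarrow> alg p \<Longrightarrow> alg (lcomp p T)"
  by (simp add: rb_coop_iff alg_endo_lcomp)

lemma rb_coop_lcomp_eps:
  assumes "rb_coop X T"
  shows "lcomp eps T = eps"
proof -
  have a: "alg (lcomp eps T)"
    by (rule rb_coop_lcomp[OF assms alg_eps])
  have "rb_lhs_pt X m eps eps T = rb_rhs_pt X m eps eps T"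
    by (rule rb_coop_points[OF assms M.comm_alg_axioms alg_eps])
  then have "conv (lcomp eps T) (lcomp eps T) = lcomp eps T"
    by (simp add: rb_lhs_pt_def rb_rhs_pt_def conv_cinv_right[OF a])
  then have "conv (cinv (lcomp eps T)) (conv (lcomp eps T) (lcomp eps T))
      = conv (cinv (lcomp eps T)) (lcomp eps T)"
    by simp
  then show ?thesis
    by (simp add: cinv_conv_cancel[OF a] conv_cinv_left[OF a])
qed

end

locale bicomod = H: commutative_hopf H + C: commutative_hopf C
  for H :: "('h,'k::field) hopf" and C :: "('c,'k) hopf" +
  fixes rl :: "'c \<Rightarrow> ('h \<times> 'c,'k) vec" and rr :: "'c \<Rightarrow> ('c \<times> 'h,'k) vec"
  assumes bicomod_ax: "bicomod_hopf H C rl rr"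
begin

lemma rl_coassoc:
  "lin (\<lambda>(h,c). lin (\<lambda>(h',c'). G h h' c') (rl c)) (rl c0) =
   lin (\<lambda>(h,c). lin (\<lambda>(h1,h2). G h1 h2 c) (hcomult H h)) (rl c0)"
proof -
  have "lin (\<lambda>(u,v,w). G u v w) (lin (\<lambda>(h,c). lin (\<lambda>(h',c'). bas (h,(h',c'))) (rl c))
          (lin rl (bas c0)))
      = lin (\<lambda>(u,v,w). G u v w) (lin (\<lambda>(h,c). lin (\<lambda>(h1,h2). bas (h1,(h2,c))) (hcomult H h))
          (lin rl (bas c0)))"
    using bicomod_ax unfolding bicomod_hopf_def by (simp only:)
  then show ?thesis
    by (simp add: lin_lin split_def)
qed

lemma rl_counit: "lin (\<lambda>(h,c). scal (hcounit H h) (G c)) (rl c0) = G c0"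
proof -
  have "lin G (lin (\<lambda>(h,c). scal (hcounit H h) (bas c)) (lin rl (bas c0))) = lin G (bas c0)"
    using bicomod_ax unfolding bicomod_hopf_def by (simp only:)
  then show ?thesis
    by (simp add: lin_lin split_def lin_scal)
qed

lemma rr_coassoc:
  "lin (\<lambda>(c,h). lin (\<lambda>(c',h'). G c' h' h) (rr c)) (rr c0) =
   lin (\<lambda>(c,h). lin (\<lambda>(h1,h2). G c h1 h2) (hcomult H h)) (rr c0)"
proof -
  have "lin (\<lambda>(u,v,w). G u v w) (lin (\<lambda>(c,h). lin (\<lambda>(c',h'). bas (c',(h',h))) (rr c))
          (lin rr (bas c0)))
      = lin (\<lambda>(u,v,w). G u v w) (lin (\<lambda>(c,h). lin (\<lambda>(h1,h2). bas (c,(h1,h2))) (hcomult H h))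
          (lin rr (bas c0)))"
    using bicomod_ax unfolding bicomod_hopf_def by (simp only:)
  then show ?thesis
    by (simp add: lin_lin split_def)
qed

lemma rr_counit: "lin (\<lambda>(c,h). scal (hcounit H h) (G c)) (rr c0) = G c0"
proof -
  have "lin G (lin (\<lambda>(c,h). scal (hcounit H h) (bas c)) (lin rr (bas c0))) = lin G (bas c0)"
    using bicomod_ax unfolding bicomod_hopf_def by (simp only:)
  then show ?thesis
    by (simp add: lin_lin split_def lin_scal)
qed

lemma rl_rr_commute:
  "lin (\<lambda>(h,c). lin (\<lambda>(c',h'). G h c' h') (rr c)) (rl c0) =
   lin (\<lambda>(c,h). lin (\<lambda>(h',c'). G h' c' h) (rl c)) (rr c0)"
proof -
  have "lin (\<lambda>(u,v,w). G u v w) (lin (\<lambda>(h,c). lin (\<lambda>(c',h'). bas (h,(c',h'))) (rr c))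
          (lin rl (bas c0)))
      = lin (\<lambda>(u,v,w). G u v w) (lin (\<lambda>(c,h). lin (\<lambda>(h',c'). bas (h',(c',h))) (rl c))
          (lin rr (bas c0)))"
    using bicomod_ax unfolding bicomod_hopf_def by (simp only:)
  then show ?thesis
    by (simp add: lin_lin split_def)
qed

lemma rl_comult:
  "lin (\<lambda>(h,c). lin (\<lambda>(c1,c2). G h c1 c2) (hcomult C c)) (rl c0) =
   lin (\<lambda>(a,b). lin (\<lambda>(h,c). lin (\<lambda>(h',c'). lin (\<lambda>x. G x c c') (hmult H h h')) (rl b)) (rl a))
     (hcomult C c0)"
proof -
  have "lin (\<lambda>(u,v,w). G u v w) (lin (\<lambda>(h,c). lin (\<lambda>(c1,c2). bas (h,(c1,c2))) (hcomult C c))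
          (lin rl (bas c0)))
      = lin (\<lambda>(u,v,w). G u v w) (lin (\<lambda>(a,b). lin (\<lambda>(h,c). lin (\<lambda>(h',c').
          tens (hmult H h h') (bas (c,c'))) (rl b)) (rl a)) (comv C (bas c0)))"
    using bicomod_ax unfolding bicomod_hopf_def by (simp only:)
  then show ?thesis
    by (simp add: lin_lin split_def comv_def lin_tens)
qed

lemma rr_comult:
  "lin (\<lambda>(c,h). lin (\<lambda>(c1,c2). G c1 c2 h) (hcomult C c)) (rr c0) =
   lin (\<lambda>(a,b). lin (\<lambda>(c,h). lin (\<lambda>(c',h'). lin (\<lambda>y. G c c' y) (hmult H h h')) (rr b)) (rr a))
     (hcomult C c0)"
proof -
  have "lin (\<lambda>(u,v,w). G u v w) (lin (\<lambda>(c,h). lin (\<lambda>(c1,c2). bas (c1,(c2,h))) (hcomult C c))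
          (lin rr (bas c0)))
      = lin (\<lambda>(u,v,w). G u v w) (lin (\<lambda>(a,b). lin (\<lambda>(c,h). lin (\<lambda>(c',h').
          tens (bas c) (tens (bas c') (hmult H h h'))) (rr b)) (rr a)) (comv C (bas c0)))"
    using bicomod_ax unfolding bicomod_hopf_def by (simp only:)
  then show ?thesis
    by (simp add: lin_lin split_def comv_def lin_tens)
qed

lemma rl_counit_C:
  "lin (\<lambda>(h,c). scal (hcounit C c) (G h)) (rl c0) = scal (hcounit C c0) (lin G (hone H))"
proof -
  have "lin G (lin (\<lambda>(h,c). scal (hcounit C c) (bas h)) (lin rl (bas c0)))
      = lin G (scal (cou C (bas c0)) (hone H))"
    using bicomod_ax unfolding bicomod_hopf_def by (simp only:)
  then show ?thesis
    by (simp add: lin_lin split_def lin_scal)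
qed

lemma rr_counit_C:
  "lin (\<lambda>(c,h). scal (hcounit C c) (G h)) (rr c0) = scal (hcounit C c0) (lin G (hone H))"
proof -
  have "lin G (lin (\<lambda>(c,h). scal (hcounit C c) (bas h)) (lin rr (bas c0)))
      = lin G (scal (cou C (bas c0)) (hone H))"
    using bicomod_ax unfolding bicomod_hopf_def by (simp only:)
  then show ?thesis
    by (simp add: lin_lin split_def lin_scal)
qed

lemma rl_mult:
  "lin rl (hmult C a b) = tprod H C (rl a) (rl b)"
  "lin rl (hone C) = tens (hone H) (hone C)"
proof -
  have "lin rl (mulv C (bas a) (bas b)) = tprod H C (lin rl (bas a)) (lin rl (bas b))"
    using bicomod_ax unfolding bicomod_hopf_def by (simp only:)
  then show "lin rl (hmult C a b) = tprod H C (rl a) (rl b)"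
    by (simp add: mulv_def)
  show "lin rl (hone C) = tens (hone H) (hone C)"
    using bicomod_ax unfolding bicomod_hopf_def by (simp only:)
qed

lemma rr_mult:
  "lin rr (hmult C a b) = tprod C H (rr a) (rr b)"
  "lin rr (hone C) = tens (hone C) (hone H)"
proof -
  have "lin rr (mulv C (bas a) (bas b)) = tprod C H (lin rr (bas a)) (lin rr (bas b))"
    using bicomod_ax unfolding bicomod_hopf_def by (simp only:)
  then show "lin rr (hmult C a b) = tprod C H (rr a) (rr b)"
    by (simp add: mulv_def)
  show "lin rr (hone C) = tens (hone C) (hone H)"
    using bicomod_ax unfolding bicomod_hopf_def by (simp only:)
qed

lemma rl_antipode: "lin rl (hantipode C c) = lin (\<lambda>(h,c). tens (bas h) (hantipode C c)) (rl c)"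
proof -
  have "lin rl (antv C (bas c)) = lin (\<lambda>(h,c). tens (bas h) (hantipode C c)) (lin rl (bas c))"
    using bicomod_ax unfolding bicomod_hopf_def by (simp only:)
  then show ?thesis
    by simp
qed

lemma rr_antipode: "lin rr (hantipode C c) = lin (\<lambda>(c,h). tens (hantipode C c) (bas h)) (rr c)"
proof -
  have "lin rr (antv C (bas c)) = lin (\<lambda>(c,h). tens (hantipode C c) (bas h)) (lin rr (bas c))"
    using bicomod_ax unfolding bicomod_hopf_def by (simp only:)
  then show ?thesis
    by simp
qed

end

section \<open>Actions of \<open>H\<close>-points on \<open>C\<close>-points\<close>

definition lact :: "('c \<Rightarrow> ('h \<times> 'c,'k::field) vec) \<Rightarrow> (('a,'k) vec \<Rightarrow> ('a,'k) vec \<Rightarrow> ('a,'k) vec) \<Rightarrow>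
   ('h \<Rightarrow> ('a,'k) vec) \<Rightarrow> ('c \<Rightarrow> ('a,'k) vec) \<Rightarrow> 'c \<Rightarrow> ('a,'k) vec"
  where "lact rl m g x c = lin (\<lambda>(h,c'). m (g h) (x c')) (rl c)"

definition ract :: "('c \<Rightarrow> ('c \<times> 'h,'k::field) vec) \<Rightarrow> (('a,'k) vec \<Rightarrow> ('a,'k) vec \<Rightarrow> ('a,'k) vec) \<Rightarrow>
   ('c \<Rightarrow> ('a,'k) vec) \<Rightarrow> ('h \<Rightarrow> ('a,'k) vec) \<Rightarrow> 'c \<Rightarrow> ('a,'k) vec"
  where "ract rr m x g c = lin (\<lambda>(c',h). m (x c') (g h)) (rr c)"

locale bicomod_points = bicomod H C rl rr + M: comm_alg m one
  for H :: "('h,'k::field) hopf" and C :: "('c,'k) hopf" and rl rr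
  and m :: "('a,'k) vec \<Rightarrow> ('a,'k) vec \<Rightarrow> ('a,'k) vec" and one
begin

sublocale Hpt: points H m one by unfold_locales
sublocale Cpt: points C m one by unfold_locales

abbreviation la where "la \<equiv> lact rl m"
abbreviation ra where "ra \<equiv> ract rr m"

lemma la_fun: "la g x = (\<lambda>c. lin (\<lambda>(h,c'). m (g h) (x c')) (rl c))"
  by (rule ext) (simp add: lact_def)

lemma ra_fun: "ra x g = (\<lambda>c. lin (\<lambda>(c',h). m (x c') (g h)) (rr c))"
  by (rule ext) (simp add: ract_def)

lemma la_Hconv: "la (Hpt.conv g g') x = la g (la g' x)"
proof
  fix c
  have "la g (la g' x) c = lin (\<lambda>(h,c1). lin (\<lambda>(h',c'). m (g h) (m (g' h') (x c'))) (rl c1)) (rl c)"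
    by (simp add: lact_def M.mul_lin_right split_def)
  also have "\<dots> = lin (\<lambda>(h,c1). lin (\<lambda>(h1,h2). m (g h1) (m (g' h2) (x c1))) (hcomult H h)) (rl c)"
    by (rule rl_coassoc)
  also have "\<dots> = la (Hpt.conv g g') x c"
    by (simp add: lact_def convol_def M.mul_lin_left M.assoc split_def)
  finally show "la (Hpt.conv g g') x c = la g (la g' x) c" ..
qed

lemma la_Heps: "la Hpt.eps x = x"
  by (rule ext) (simp add: lact_def conv_unit_def M.mul_scal_left M.one_left rl_counit)

lemma la_Cconv:
  assumes "Hpt.alg g"
  shows "la g (Cpt.conv x y) = Cpt.conv (la g x) (la g y)"
proof
  fix c
  have "la g (Cpt.conv x y) c = lin (\<lambda>(h,c'). lin (\<lambda>(c1,c2). m (g h) (m (x c1) (y c2)))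
        (hcomult C c')) (rl c)"
    by (simp add: lact_def convol_def M.mul_lin_right split_def)
  also have "\<dots> = lin (\<lambda>(a,b). lin (\<lambda>(h,c1). lin (\<lambda>(h',c2). lin (\<lambda>z. m (g z) (m (x c1) (y c2)))
        (hmult H h h')) (rl b)) (rl a)) (hcomult C c)"
    by (rule rl_comult)
  also have "\<dots> = lin (\<lambda>(a,b). lin (\<lambda>(h,c1). lin (\<lambda>(h',c2). m (m (g h) (x c1)) (m (g h') (y c2)))
        (rl b)) (rl a)) (hcomult C c)"
    by (simp add: M.mul_lin_left[symmetric] Hpt.alg_hmult assms M.mul_ac)
  also have "\<dots> = Cpt.conv (la g x) (la g y) c"
    by (simp add: lact_def convol_def M.mul_lin_lin split_def)
  finally show "la g (Cpt.conv x y) c = Cpt.conv (la g x) (la g y) c" .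
qed

lemma la_Ceps:
  assumes "Hpt.alg g"
  shows "la g Cpt.eps = Cpt.eps"
  by (rule ext) (simp add: lact_def conv_unit_def M.mul_scal_right M.one_right rl_counit_C
      Hpt.alg_one assms)

lemma alg_la:
  assumes "Hpt.alg g" "Cpt.alg x"
  shows "Cpt.alg (la g x)"
proof -
  have "lin (la g x) (hmult C a b) = m (la g x a) (la g x b)" for a b
  proof -
    have "lin (la g x) (hmult C a b) = lin (\<lambda>(h,c). m (g h) (x c)) (lin rl (hmult C a b))"
      by (simp add: la_fun lin_lin)
    also have "\<dots> = lin (\<lambda>(h,c). lin (\<lambda>(h',c'). m (m (g h) (g h')) (m (x c) (x c'))) (rl b)) (rl a)"
      by (simp add: rl_mult tprod_def lin_lin M.lin_mul_tens' split_def Hpt.alg_hmult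
          Cpt.alg_hmult assms)
    also have "\<dots> = m (la g x a) (la g x b)"
      by (simp add: lact_def M.mul_lin_lin split_def M.mul_ac)
    finally show ?thesis .
  qed
  moreover have "lin (la g x) (hone C) = one"
    by (simp add: la_fun lin_lin[symmetric] rl_mult M.lin_mul_tens Hpt.alg_one Cpt.alg_one assms
        M.one_left)
  ultimately show ?thesis by (simp add: alg_map_def)
qed

lemma la_Ccinv: "la g (Cpt.cinv x) = Cpt.cinv (la g x)"
proof
  fix c
  have "Cpt.cinv (la g x) c = lin (\<lambda>(h,c). m (g h) (x c)) (lin rl (hantipode C c))"
    by (simp add: conv_inv_def la_fun lin_lin)
  also have "\<dots> = la g (Cpt.cinv x) c"
    by (simp add: rl_antipode lin_lin split_def M.lin_mul_tens' lact_def conv_inv_def)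
  finally show "la g (Cpt.cinv x) c = Cpt.cinv (la g x) c" ..
qed

lemma ra_Hconv: "ra x (Hpt.conv g g') = ra (ra x g) g'"
proof
  fix c
  have "ra (ra x g) g' c = lin (\<lambda>(c1,h). lin (\<lambda>(c',h'). m (m (x c') (g h')) (g' h)) (rr c1)) (rr c)"
    by (simp add: ract_def M.mul_lin_left split_def)
  also have "\<dots> = lin (\<lambda>(c1,h). lin (\<lambda>(h1,h2). m (m (x c1) (g h1)) (g' h2)) (hcomult H h)) (rr c)"
    by (rule rr_coassoc)
  also have "\<dots> = ra x (Hpt.conv g g') c"
    by (simp add: ract_def convol_def M.mul_lin_right M.assoc split_def)
  finally show "ra x (Hpt.conv g g') c = ra (ra x g) g' c" ..
qed

lemma ra_Heps: "ra x Hpt.eps = x"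
  by (rule ext) (simp add: ract_def conv_unit_def M.mul_scal_right M.one_right rr_counit)

lemma ra_Cconv:
  assumes "Hpt.alg g"
  shows "ra (Cpt.conv x y) g = Cpt.conv (ra x g) (ra y g)"
proof
  fix c
  have "ra (Cpt.conv x y) g c = lin (\<lambda>(c',h). lin (\<lambda>(c1,c2). m (m (x c1) (y c2)) (g h))
        (hcomult C c')) (rr c)"
    by (simp add: ract_def convol_def M.mul_lin_left split_def)
  also have "\<dots> = lin (\<lambda>(a,b). lin (\<lambda>(c1,h). lin (\<lambda>(c2,h'). lin (\<lambda>z. m (m (x c1) (y c2)) (g z))
        (hmult H h h')) (rr b)) (rr a)) (hcomult C c)"
    by (rule rr_comult)
  also have "\<dots> = lin (\<lambda>(a,b). lin (\<lambda>(c1,h). lin (\<lambda>(c2,h'). m (m (x c1) (g h)) (m (y c2) (g h')))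
        (rr b)) (rr a)) (hcomult C c)"
    by (simp add: M.mul_lin_right[symmetric] M.mul_lin_left[symmetric] Hpt.alg_hmult assms M.mul_ac)
  also have "\<dots> = Cpt.conv (ra x g) (ra y g) c"
    by (simp add: ract_def convol_def M.mul_lin_lin split_def)
  finally show "ra (Cpt.conv x y) g c = Cpt.conv (ra x g) (ra y g) c" .
qed

lemma ra_Ceps:
  assumes "Hpt.alg g"
  shows "ra Cpt.eps g = Cpt.eps"
  by (rule ext) (simp add: ract_def conv_unit_def M.mul_scal_left M.one_left rr_counit_C
      Hpt.alg_one assms)

lemma alg_ra:
  assumes "Hpt.alg g" "Cpt.alg x"
  shows "Cpt.alg (ra x g)"
proof -
  have "lin (ra x g) (hmult C a b) = m (ra x g a) (ra x g b)" for a b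
  proof -
    have "lin (ra x g) (hmult C a b) = lin (\<lambda>(c,h). m (x c) (g h)) (lin rr (hmult C a b))"
      by (simp add: ra_fun lin_lin)
    also have "\<dots> = lin (\<lambda>(c,h). lin (\<lambda>(c',h'). m (m (x c) (x c')) (m (g h) (g h'))) (rr b)) (rr a)"
      by (simp add: rr_mult tprod_def lin_lin M.lin_mul_tens' split_def Hpt.alg_hmult
          Cpt.alg_hmult assms)
    also have "\<dots> = m (ra x g a) (ra x g b)"
      by (simp add: ract_def M.mul_lin_lin split_def M.mul_ac)
    finally show ?thesis .
  qed
  moreover have "lin (ra x g) (hone C) = one"
    by (simp add: ra_fun lin_lin[symmetric] rr_mult M.lin_mul_tens Hpt.alg_one Cpt.alg_one assms
        M.one_left)
  ultimately show ?thesis by (simp add: alg_map_def)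
qed

lemma ra_Ccinv: "ra (Cpt.cinv x) g = Cpt.cinv (ra x g)"
proof
  fix c
  have "Cpt.cinv (ra x g) c = lin (\<lambda>(c,h). m (x c) (g h)) (lin rr (hantipode C c))"
    by (simp add: conv_inv_def ra_fun lin_lin)
  also have "\<dots> = ra (Cpt.cinv x) g c"
    by (simp add: rr_antipode lin_lin split_def M.lin_mul_tens' ract_def conv_inv_def)
  finally show "ra (Cpt.cinv x) g c = Cpt.cinv (ra x g) c" ..
qed

lemma ra_la_commute: "ra (la g x) h = la g (ra x h)"
proof
  fix c
  have "la g (ra x h) c = lin (\<lambda>(h',c1). lin (\<lambda>(c2,k). m (g h') (m (x c2) (h k))) (rr c1)) (rl c)"
    by (simp add: lact_def ract_def M.mul_lin_right split_def)
  also have "\<dots> = lin (\<lambda>(c1,k). lin (\<lambda>(h',c2). m (g h') (m (x c2) (h k))) (rl c1)) (rr c)"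
    by (rule rl_rr_commute)
  also have "\<dots> = ra (la g x) h c"
    by (simp add: lact_def ract_def M.mul_lin_left M.assoc split_def)
  finally show "ra (la g x) h c = la g (ra x h) c" ..
qed

lemma la_la_cinv: "Hpt.alg g \<Longrightarrow> la g (la (Hpt.cinv g) x) = x"
  by (simp add: la_Hconv[symmetric] Hpt.conv_cinv_right la_Heps)

lemma la_cinv_la: "Hpt.alg g \<Longrightarrow> la (Hpt.cinv g) (la g x) = x"
  by (simp add: la_Hconv[symmetric] Hpt.conv_cinv_left la_Heps)

lemma ra_ra_cinv: "Hpt.alg g \<Longrightarrow> ra (ra x g) (Hpt.cinv g) = x"
  by (simp add: ra_Hconv[symmetric] Hpt.conv_cinv_right ra_Heps)

lemma ra_cinv_ra: "Hpt.alg g \<Longrightarrow> ra (ra x (Hpt.cinv g)) g = x"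
  by (simp add: ra_Hconv[symmetric] Hpt.conv_cinv_left ra_Heps)

lemmas group_simps =
  la_Hconv ra_Hconv la_Heps ra_Heps la_Cconv ra_Cconv la_Ceps ra_Ceps ra_la_commute
  la_la_cinv la_cinv_la ra_ra_cinv ra_cinv_ra la_Ccinv[symmetric] ra_Ccinv[symmetric]
  Hpt.conv_assoc Cpt.conv_assoc Hpt.conv_cinv_right Hpt.conv_cinv_left
  Cpt.conv_cinv_right Cpt.conv_cinv_left
  Hpt.conv_cinv_cancel Hpt.cinv_conv_cancel Cpt.conv_cinv_cancel Cpt.cinv_conv_cancel
  Hpt.cinv_conv Cpt.cinv_conv Hpt.cinv_cinv Cpt.cinv_cinv Hpt.cinv_eps Cpt.cinv_eps
  Hpt.alg_conv Hpt.alg_cinv Hpt.alg_eps Cpt.alg_conv Cpt.alg_cinv Cpt.alg_eps alg_la alg_ra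

end

section \<open>Points of the smash coproduct\<close>

context bicomod
begin

abbreviation CxH where "CxH \<equiv> smash H C rl rr"

lemma hmult_smash: "hmult CxH (c,h) (d,k) = tens (hmult C c d) (hmult H h k)"
  by (simp add: smash_def)

lemma hone_smash: "hone CxH = tens (hone C) (hone H)"
  by (simp add: smash_def)

lemma mulv_smash: "mulv CxH = tens_alg (mulv C) (mulv H)"
  by (simp add: fun_eq_iff mulv_def tens_alg_def smash_def split_def)

lemma mulv_smash_tens:
  "mulv CxH (tens u1 u2) (tens v1 v2) = tens (mulv C u1 v1) (mulv H u2 v2)"
  unfolding mulv_smash by (rule tens_alg_tens[OF C.A.comm_alg_axioms H.A.comm_alg_axioms])

lemma comm_alg_smash: "comm_alg (mulv CxH) (hone CxH)"
  unfolding mulv_smash hone_smash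
  by (rule comm_alg_tens_alg[OF C.A.comm_alg_axioms H.A.comm_alg_axioms])

end

definition pair_pt :: "(('a,'k::field) vec \<Rightarrow> ('a,'k) vec \<Rightarrow> ('a,'k) vec) \<Rightarrow>
    ('c \<Rightarrow> ('a,'k) vec) \<Rightarrow> ('h \<Rightarrow> ('a,'k) vec) \<Rightarrow> 'c \<times> 'h \<Rightarrow> ('a,'k) vec" where
  "pair_pt m x g = (\<lambda>(c,k). m (x c) (g k))"

context bicomod_points
begin

abbreviation pt where "pt \<equiv> pair_pt m"

abbreviation C_part where "C_part a \<equiv> \<lambda>c. lin a (tens (bas c) (hone H))"
abbreviation H_part where "H_part a \<equiv> \<lambda>k. lin a (tens (hone C) (bas k))"

lemma pt_apply [simp]: "pt x g (c,k) = m (x c) (g k)"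
  by (simp add: pair_pt_def)

lemma lin_pt_tens: "lin (pt x g) (tens u v) = m (lin x u) (lin g v)"
  unfolding pair_pt_def by (rule M.lin_mul_tens)

lemma lin_pt_tens_one: "Hpt.alg g \<Longrightarrow> lin (pt x g) (tens (bas c) (hone H)) = x c"
  by (simp add: lin_pt_tens Hpt.alg_one M.one_right)

lemma pt_eq_iff: "Hpt.alg g \<Longrightarrow> pt x g = pt x' g \<longleftrightarrow> x = x'"
  by (metis lin_pt_tens_one ext)

lemma alg_pt:
  assumes "Cpt.alg x" "Hpt.alg g"
  shows "alg_map CxH m one (pt x g)"
proof -
  have "lin (pt x g) (hmult CxH p q) = m (pt x g p) (pt x g q)" for p q
    by (cases p; cases q)
      (simp add: hmult_smash lin_pt_tens Cpt.alg_hmult Hpt.alg_hmult assms M.mul_ac)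
  moreover have "lin (pt x g) (hone CxH) = one"
    by (simp add: hone_smash lin_pt_tens Cpt.alg_one Hpt.alg_one assms M.one_left)
  ultimately show ?thesis
    by (simp add: alg_map_def)
qed

lemma alg_map_smash_eq_pt:
  assumes "alg_map CxH m one a"
  shows "a = pt (C_part a) (H_part a)"
proof (rule ext, clarify)
  fix c k
  have "pt (C_part a) (H_part a) (c,k)
        = lin a (mulv CxH (tens (bas c) (hone H)) (tens (hone C) (bas k)))"
    by (simp add: alg_map_mulv[OF M.comm_alg_axioms assms])
  also have "\<dots> = a (c,k)"
    by (simp add: mulv_smash_tens C.mult_one H.mult_one)
  finally show "a (c,k) = pt (C_part a) (H_part a) (c,k)" ..
qed

lemma alg_C_part:
  assumes "alg_map CxH m one a"
  shows "Cpt.alg (C_part a)"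
proof -
  have "lin (C_part a) v = lin a (tens v (hone H))" for v
    by (simp add: lin_lin[symmetric] tens_lin_left[symmetric])
  then show ?thesis
    using alg_map_mulv[OF M.comm_alg_axioms assms,
        of "tens (bas _) (hone H)" "tens (bas _) (hone H)"]
      alg_map_one[OF assms]
    by (simp add: alg_map_def mulv_smash_tens H.mult_one mulv_def[of C "bas _"] hone_smash)
qed

lemma alg_H_part:
  assumes "alg_map CxH m one a"
  shows "Hpt.alg (H_part a)"
proof -
  have "lin (H_part a) v = lin a (tens (hone C) v)" for v
    by (simp add: lin_lin[symmetric] tens_lin_right[symmetric])
  then show ?thesis
    using alg_map_mulv[OF M.comm_alg_axioms assms,
        of "tens (hone C) (bas _)" "tens (hone C) (bas _)"]
      alg_map_one[OF assms]
    by (simp add: alg_map_def mulv_smash_tens C.mult_one mulv_def[of H "bas _"] hone_smash)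
qed

lemma pt_conv:
  assumes "Hpt.alg g" "Hpt.alg h"
  shows "convol CxH m (pt x g) (pt y h) = pt (Cpt.conv (ra x h) (la g y)) (Hpt.conv g h)"
proof (rule ext, clarify)
  fix c k
  have "convol CxH m (pt x g) (pt y h) (c,k)
      = lin (\<lambda>(a,b). lin (\<lambda>(a0,a1). lin (\<lambda>(bm,b0). lin (\<lambda>(h1,h2).
          m (m (x a0) (m (g bm) (g h1))) (m (y b0) (m (h h2) (h a1))))
        (hcomult H k)) (rl b)) (rr a)) (hcomult C c)"
    unfolding convol_def smash_def
    by (simp add: lin_lin split_def lin_pt_tens M.lin_mul_tens' Hpt.alg_hmult assms)
  also have "\<dots> = pt (Cpt.conv (ra x h) (la g y)) (Hpt.conv g h) (c,k)"
    apply (simp only: pair_pt_def convol_fun[where X = C] split_def prod.case M.mul_lin_left)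
    apply (simp only: ract_def split_def M.mul_lin_left M.mul_lin_right)
    apply (simp only: lact_def split_def M.mul_lin_left M.mul_lin_right)
    apply (simp only: convol_fun split_def M.mul_lin_left M.mul_lin_right)
    apply (simp add: M.mul_ac)
    done
  finally show "convol CxH m (pt x g) (pt y h) (c,k)
      = pt (Cpt.conv (ra x h) (la g y)) (Hpt.conv g h) (c,k)" .
qed

text \<open>The antipode of \<open>C \<ltimes> H\<close> and the map \<open>Btilde\<close> share the shape
  \<open>c \<ltimes> h \<mapsto> F(c_(0)[0]) \<ltimes> G(c_(-1) c_(0)[1] h)\<close> with \<open>G\<close> multiplicative; on points this is
  \<open>(x, g) \<mapsto> (\<gamma> \<triangleright> (x \<circ> F) \<triangleleft> \<gamma>, \<gamma>)\<close> with \<open>\<gamma> = g \<circ> G\<close>.\<close>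

lemma lin_smash_shape:
  "lin (\<lambda>(n,c0). lin (\<lambda>(c00,c01). m (y c00) (m (m (\<gamma> n) (\<gamma> c01)) (\<gamma> k))) (rr c0)) (rl c)
   = pt (la \<gamma> (ra y \<gamma>)) \<gamma> (c,k)"
  apply (simp only: pair_pt_def lact_def split_def prod.case M.mul_lin_left)
  apply (simp only: ract_def split_def M.mul_lin_left M.mul_lin_right)
  apply (simp add: M.mul_ac)
  done

lemma pt_cinv:
  assumes "Hpt.alg g"
  shows "conv_inv CxH (pt x g) = pt (la (Hpt.cinv g) (ra (Cpt.cinv x) (Hpt.cinv g))) (Hpt.cinv g)"
proof (rule ext, clarify)
  fix c k
  have "Hpt.alg (Hpt.cinv g)"
    by (rule Hpt.alg_cinv[OF assms])
  then have "conv_inv CxH (pt x g) (c,k) = lin (\<lambda>(n,c0). lin (\<lambda>(c00,c01).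
      m (Cpt.cinv x c00) (m (m (Hpt.cinv g n) (Hpt.cinv g c01)) (Hpt.cinv g k))) (rr c0)) (rl c)"
    unfolding conv_inv_def smash_def
    by (simp add: lin_lin split_def lin_pt_tens Hpt.lin_cinv[symmetric] Hpt.alg_mulv
        conv_inv_def[symmetric])
  then show "conv_inv CxH (pt x g) (c,k)
      = pt (la (Hpt.cinv g) (ra (Cpt.cinv x) (Hpt.cinv g))) (Hpt.cinv g) (c,k)"
    by (simp only: lin_smash_shape)
qed

lemma pt_Btilde:
  assumes "Hpt.alg (lcomp g B)"
  shows "lcomp (pt x g) (Btilde H rl rr R B)
       = pt (la (lcomp g B) (ra (lcomp x R) (lcomp g B))) (lcomp g B)"
proof (rule ext, clarify)
  fix c k
  have "lcomp (pt x g) (Btilde H rl rr R B) (c,k) = lin (\<lambda>(n,c0). lin (\<lambda>(c00,c01).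
      m (lcomp x R c00) (m (m (lcomp g B n) (lcomp g B c01)) (lcomp g B k))) (rr c0)) (rl c)"
    unfolding lcomp_def[of "pt x g"] Btilde_def
    by (simp add: lin_lin split_def lin_pt_tens lin_lcomp[symmetric] Hpt.alg_mulv[OF assms]
        lcomp_def[of x R, symmetric] lcomp_def[of g B, symmetric])
  then show "lcomp (pt x g) (Btilde H rl rr R B) (c,k)
      = pt (la (lcomp g B) (ra (lcomp x R) (lcomp g B))) (lcomp g B) (c,k)"
    by (simp only: lin_smash_shape)
qed

end

section \<open>The two conditions on points\<close>

lemma cond1_of_bas:
  fixes H :: "('h,'k::field) hopf" and C :: "('c,'k) hopf"
    and rl :: "'c \<Rightarrow> ('h \<times> 'c,'k) vec" and rr :: "'c \<Rightarrow> ('c \<times> 'h,'k) vec"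
    and R :: "'c \<Rightarrow> ('c,'k) vec" and B :: "'h \<Rightarrow> ('h,'k) vec"
  assumes "\<And>c0. cond1 H C rl rr R B (bas c0)"
  shows "cond1 H C rl rr R B c"
proof -
  have lhs: "lin F (com2 C (lin R c)) = lin (\<lambda>c0. lin F (com2 C (R c0))) c"
    for F :: "'c \<times> 'c \<times> 'c \<Rightarrow> ('c \<times> 'c \<times> 'h,'k) vec"
    by (simp add: com2_def comv_def lin_lin)
  have rhs: "lin F (comv C c) = lin (\<lambda>c0. lin F (comv C (bas c0))) c"
    for F :: "'c \<times> 'c \<Rightarrow> ('c \<times> 'c \<times> 'h,'k) vec"
    by (simp add: comv_def lin_lin)
  show ?thesis
    using assms unfolding cond1_def by (subst lhs, subst rhs) simp
qed

lemma cond2_of_bas: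
  fixes H :: "('h,'k::field) hopf"
    and rl :: "'c \<Rightarrow> ('h \<times> 'c,'k) vec" and rr :: "'c \<Rightarrow> ('c \<times> 'h,'k) vec"
    and R :: "'c \<Rightarrow> ('c,'k) vec" and B :: "'h \<Rightarrow> ('h,'k) vec"
  assumes "\<And>c0. cond2 H rl rr R B (bas c0)"
  shows "cond2 H rl rr R B c"
proof -
  have lhs: "lin F (lin rr (lin R c)) = lin (\<lambda>c0. lin F (lin rr (R c0))) c"
    for F :: "'c \<times> 'h \<Rightarrow> ('h \<times> 'c,'k) vec"
    by (simp add: lin_lin)
  have rhs: "lin F (lin rr c) = lin (\<lambda>c0. lin F (rr c0)) c"
    for F :: "'c \<times> 'h \<Rightarrow> ('h \<times> 'c,'k) vec"
    by (simp add: lin_lin)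
  show ?thesis
    using assms unfolding cond2_def by (subst lhs, subst rhs) simp
qed

context bicomod_points
begin

definition cond1_pt where
  "cond1_pt R B x y h \<longleftrightarrow>
     lcomp (Cpt.conv (ra (Cpt.conv x (lcomp x R)) h) (Cpt.conv y (la h (Cpt.cinv (lcomp x R))))) R
     = Cpt.conv (la (Hpt.cinv (lcomp h B)) (lcomp x R)) (lcomp y R)"

definition cond2_pt where
  "cond2_pt R B g y \<longleftrightarrow>
     lcomp (ra (la (Hpt.conv g (lcomp g B)) y) (Hpt.cinv (lcomp g B))) R
     = ra (lcomp y R) (Hpt.cinv (lcomp g B))"

lemma lin_cond1_lhs:
  assumes "Cpt.alg x" "Cpt.alg (lcomp x R)" "Hpt.alg h"
  shows "lin (\<lambda>(u,v,w). m (x u) (m (y v) (h w)))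
     (lin (\<lambda>(p,(q,r)). lin (\<lambda>(p0,p1). lin (\<lambda>(a,b). lin (\<lambda>(s,t).
           tens (mulv C (bas a) (lin R (mulv C (bas b) (hantipode C t))))
             (tens (bas q) (hmult H p1 s)))
         (rl r)) (hcomult C p0)) (rr p)) (com2 C (lin R (bas c))))
   = lcomp (Cpt.conv (ra (Cpt.conv x (lcomp x R)) h)
        (Cpt.conv y (la h (Cpt.cinv (lcomp x R))))) R c"
proof -
  have x_factor: "lin x (mulv C (bas a) (lin R (mulv C (bas b) (hantipode C t))))
      = m (x a) (m (lcomp x R b) (Cpt.cinv (lcomp x R) t))" for a b t
    by (simp add: Cpt.alg_mulv assms lin_lcomp[symmetric] conv_inv_def)
  show ?thesis
    apply (simp add: com2_def comv_def lin_lin split_def M.lin_mul3_tens' x_factor Hpt.alg_hmult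
        assms)
    apply (simp only: lcomp_def[of "convol C m _ _" R])
    apply (simp only: Cpt.lin_conv comv_def lin_lin split_def prod.case)
    apply (simp only: convol_def[of C m y] split_def M.mul_lin_right)
    apply (simp only: ract_def split_def M.mul_lin_left)
    apply (simp only: convol_def[of C m x] split_def M.mul_lin_left)
    apply (simp only: lact_def split_def M.mul_lin_right)
    apply (simp add: M.mul_ac)
    done
qed

lemma lin_cond1_rhs:
  "lin (\<lambda>(u,v,w). m (x u) (m (y v) (h w)))
     (lin (\<lambda>(a,b). lin (\<lambda>(s,t). tens (R t) (tens (R b) (lin B (hantipode H s)))) (rl a))
       (comv C (bas c)))
   = Cpt.conv (la (Hpt.cinv (lcomp h B)) (lcomp x R)) (lcomp y R) c"
  apply (simp add: comv_def lin_lin split_def M.lin_mul3_tens' lcomp_fun[of h B, symmetric]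
      conv_inv_def[of H "lcomp h B", symmetric]
      lcomp_def[of x R, symmetric] lcomp_def[of y R, symmetric])
  apply (simp only: convol_def split_def M.mul_lin_left lact_def)
  apply (simp add: M.mul_ac)
  done

lemma lin_cond2_lhs:
  assumes "Hpt.alg g" "Hpt.alg (lcomp g B)"
  shows "lin (\<lambda>(u,v). m (g u) (y v))
     (lin (\<lambda>(p,q). lin (\<lambda>(s,t). lin (\<lambda>(a,b).
           tens (mulv H (bas a) (lin B (mulv H (bas b) (hantipode H q)))) (bas t))
         (hcomult H s)) (rl p)) (lin rr (lin R (bas c))))
   = lcomp (ra (la (Hpt.conv g (lcomp g B)) y) (Hpt.cinv (lcomp g B))) R c"
proof -
  have g_factor: "lin g (mulv H (bas a) (lin B (mulv H (bas b) (hantipode H q))))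
      = m (g a) (m (lcomp g B b) (Hpt.cinv (lcomp g B) q))" for a b q
    by (simp add: Hpt.alg_mulv assms lin_lcomp[symmetric] conv_inv_def)
  show ?thesis
    apply (simp add: lin_lin split_def M.lin_mul_tens' g_factor)
    apply (simp only: lcomp_def[of "ra _ _" R])
    apply (simp only: ra_fun lin_lin split_def prod.case)
    apply (simp only: lact_def split_def M.mul_lin_left)
    apply (simp only: convol_def split_def M.mul_lin_left)
    apply (simp add: M.mul_ac)
    done
qed

lemma lin_cond2_rhs:
  "lin (\<lambda>(u,v). m (g u) (y v)) (lin (\<lambda>(p,q). tens (lin B (hantipode H q)) (R p)) (lin rr (bas c)))
   = ra (lcomp y R) (Hpt.cinv (lcomp g B)) c"
  by (simp add: lin_lin split_def M.lin_mul_tens' lcomp_fun[of g B, symmetric]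
      conv_inv_def[of H "lcomp g B", symmetric] ract_def lcomp_def[of y R, symmetric] M.mul_ac)

lemma cond1_pt_of_cond1:
  assumes "\<And>c. cond1 H C rl rr R B c" "Cpt.alg x" "Cpt.alg (lcomp x R)" "Hpt.alg h"
  shows "cond1_pt R B x y h"
proof -
  have "lcomp (Cpt.conv (ra (Cpt.conv x (lcomp x R)) h)
        (Cpt.conv y (la h (Cpt.cinv (lcomp x R))))) R c
      = Cpt.conv (la (Hpt.cinv (lcomp h B)) (lcomp x R)) (lcomp y R) c" for c
    using assms(1)[of "bas c", unfolded cond1_def]
      lin_cond1_lhs[OF assms(2-4), where y = y and c = c]
      lin_cond1_rhs[where x = x and y = y and h = h and c = c and R = R and B = B]
    by simp
  then show ?thesis
    by (simp add: cond1_pt_def fun_eq_iff)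
qed

lemma cond2_pt_of_cond2:
  assumes "\<And>c. cond2 H rl rr R B c" "Hpt.alg g" "Hpt.alg (lcomp g B)"
  shows "cond2_pt R B g y"
proof -
  have "lcomp (ra (la (Hpt.conv g (lcomp g B)) y) (Hpt.cinv (lcomp g B))) R c
      = ra (lcomp y R) (Hpt.cinv (lcomp g B)) c" for c
    using assms(1)[of "bas c", unfolded cond2_def]
      lin_cond2_lhs[OF assms(2,3), where y = y and c = c and R = R]
      lin_cond2_rhs[where g = g and y = y and c = c and R = R and B = B]
    by simp
  then show ?thesis
    by (simp add: cond2_pt_def fun_eq_iff)
qed

end

section \<open>The Rota-Baxter identity on points of the smash coproduct\<close>

context bicomod_points
begin

text \<open>The substitution \<open>x = ((g \<star> \<gamma>) \<triangleright> x') \<triangleleft> \<gamma>\<inverse>\<close> lets the second condition move \<open>x\<close> through \<open>R\<close>,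
  after which the first condition at \<open>(x', y, h)\<close> applies.\<close>

lemma Btilde_rb_C_component:
  assumes rbB: "rb_coop H B" and R: "alg_endo C R"
    and C1: "\<And>x y h. Cpt.alg x \<Longrightarrow> Cpt.alg y \<Longrightarrow> Hpt.alg h \<Longrightarrow> cond1_pt R B x y h"
    and C2: "\<And>g y. Hpt.alg g \<Longrightarrow> Cpt.alg y \<Longrightarrow> cond2_pt R B g y"
    and x: "Cpt.alg x" and y: "Cpt.alg y" and g: "Hpt.alg g" and h: "Hpt.alg h"
  defines "\<gamma> \<equiv> lcomp g B" and "\<delta> \<equiv> lcomp h B"
  defines "u \<equiv> la \<gamma> (ra (lcomp x R) \<gamma>)"
  shows "lcomp (Cpt.conv (ra x (Hpt.conv \<gamma> (Hpt.conv h (Hpt.cinv \<gamma>))))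
             (la g (Cpt.conv (ra u (Hpt.conv h (Hpt.cinv \<gamma>)))
                (la \<gamma> (Cpt.conv (ra y (Hpt.cinv \<gamma>))
                   (la h (la (Hpt.cinv \<gamma>) (ra (Cpt.cinv u) (Hpt.cinv \<gamma>))))))))) R
       = Cpt.conv (la (Hpt.cinv \<delta>) (lcomp x R)) (ra (lcomp y R) (Hpt.cinv \<gamma>))"
proof -
  have R_alg: "Cpt.alg (lcomp z R)" if "Cpt.alg z" for z
    using Cpt.alg_endo_lcomp[OF R that] .
  have ga: "Hpt.alg \<gamma>" "Hpt.alg \<delta>"
    unfolding \<gamma>_def \<delta>_def using Hpt.rb_coop_lcomp[OF rbB] g h by auto
  define k where "k = Hpt.conv g \<gamma>"
  have k: "Hpt.alg k"
    unfolding k_def using g ga by (simp add: Hpt.alg_conv)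
  define x' where "x' = la (Hpt.cinv k) (ra x \<gamma>)"
  have x': "Cpt.alg x'"
    unfolding x'_def using k ga x by (simp add: group_simps)
  have "ra (la k x') (Hpt.cinv \<gamma>) = x"
    unfolding x'_def using k ga by (simp add: group_simps)
  then have "lcomp x R = ra (lcomp x' R) (Hpt.cinv \<gamma>)"
    using C2[OF g x', unfolded cond2_pt_def] unfolding k_def \<gamma>_def by simp
  then have Rx': "lcomp x' R = ra (lcomp x R) \<gamma>"
    using ga by (simp add: group_simps)
  define X where "X = Cpt.conv (ra (Cpt.conv x' (lcomp x' R)) h)
      (Cpt.conv y (la h (Cpt.cinv (lcomp x' R))))"
  have X: "Cpt.alg X"
    unfolding X_def using x' R_alg[OF x'] y h by (simp add: group_simps)
  have RX: "lcomp X R = Cpt.conv (la (Hpt.cinv \<delta>) (lcomp x' R)) (lcomp y R)"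
    using C1[OF x' y h] unfolding X_def \<delta>_def cond1_pt_def .
  have "la g (la \<gamma> (ra (ra x' h) (Hpt.cinv \<gamma>))) = ra (ra (ra x \<gamma>) h) (Hpt.cinv \<gamma>)"
    unfolding x'_def k_def using g ga by (simp add: group_simps)
  then have "Cpt.conv (ra x (Hpt.conv \<gamma> (Hpt.conv h (Hpt.cinv \<gamma>))))
             (la g (Cpt.conv (ra u (Hpt.conv h (Hpt.cinv \<gamma>)))
                (la \<gamma> (Cpt.conv (ra y (Hpt.cinv \<gamma>))
                   (la h (la (Hpt.cinv \<gamma>) (ra (Cpt.cinv u) (Hpt.cinv \<gamma>))))))))
      = ra (la k X) (Hpt.cinv \<gamma>)"
    unfolding X_def Rx' u_def k_def using x y g h ga R_alg[OF x] x' by (simp add: group_simps)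
  moreover have "lcomp (ra (la k X) (Hpt.cinv \<gamma>)) R = ra (lcomp X R) (Hpt.cinv \<gamma>)"
    using C2[OF g X, unfolded cond2_pt_def] unfolding k_def \<gamma>_def by simp
  ultimately show ?thesis
    unfolding RX Rx' using ga R_alg x y by (simp add: group_simps)
qed

lemma rb_pt_Btilde:
  assumes rbB: "rb_coop H B" and R: "alg_endo C R"
    and C1: "\<And>x y h. Cpt.alg x \<Longrightarrow> Cpt.alg y \<Longrightarrow> Hpt.alg h \<Longrightarrow> cond1_pt R B x y h"
    and C2: "\<And>g y. Hpt.alg g \<Longrightarrow> Cpt.alg y \<Longrightarrow> cond2_pt R B g y"
    and x: "Cpt.alg x" and y: "Cpt.alg y" and g: "Hpt.alg g" and h: "Hpt.alg h"
  shows "rb_lhs_pt CxH m (pt x g) (pt y h) (Btilde H rl rr R B)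
       = rb_rhs_pt CxH m (pt x g) (pt y h) (Btilde H rl rr R B)"
proof -
  have ga: "Hpt.alg (lcomp g B)" "Hpt.alg (lcomp h B)"
    using Hpt.rb_coop_lcomp[OF rbB] g h by auto
  have rx: "Cpt.alg (lcomp x R)" "Cpt.alg (lcomp y R)"
    using Cpt.alg_endo_lcomp[OF R] x y by auto
  have "lcomp (Hpt.conv g (Hpt.conv (lcomp g B) (Hpt.conv h (Hpt.cinv (lcomp g B))))) B
      = Hpt.conv (lcomp g B) (lcomp h B)"
    using rb_coop_points[OF rbB M.comm_alg_axioms g, of h]
    by (simp add: rb_lhs_pt_def rb_rhs_pt_def)
  then show ?thesis
    unfolding rb_lhs_pt_def rb_rhs_pt_def
    using ga rx x y g h Btilde_rb_C_component[OF rbB R C1 C2 x y g h]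
    by (simp add: pt_Btilde pt_cinv pt_conv group_simps Hpt.rb_coop_lcomp[OF rbB])
qed

lemma rb_pt_R_of_smash:
  assumes rbB: "rb_coop H B" and rbT: "rb_coop CxH (Btilde H rl rr R B)"
    and x: "Cpt.alg x" and y: "Cpt.alg y"
  shows "rb_lhs_pt C m x y R = rb_rhs_pt C m x y R"
proof -
  have "rb_lhs_pt CxH m (pt x Hpt.eps) (pt y Hpt.eps) (Btilde H rl rr R B)
      = rb_rhs_pt CxH m (pt x Hpt.eps) (pt y Hpt.eps) (Btilde H rl rr R B)"
    by (rule rb_coop_points[OF rbT M.comm_alg_axioms alg_pt[OF x Hpt.alg_eps]])
  then show ?thesis
    unfolding rb_lhs_pt_def rb_rhs_pt_def
    using Hpt.rb_coop_lcomp_eps[OF rbB]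
    by (simp add: pt_Btilde pt_cinv pt_conv group_simps pt_eq_iff)
qed

lemma cond2_pt_of_smash:
  assumes rbB: "rb_coop H B" and rbT: "rb_coop CxH (Btilde H rl rr R B)" and rbR: "rb_coop C R"
    and g: "Hpt.alg g" and y: "Cpt.alg y"
  shows "cond2_pt R B g y"
proof -
  have ga: "Hpt.alg (lcomp g B)"
    using Hpt.rb_coop_lcomp[OF rbB g] .
  have ry: "Cpt.alg (lcomp y R)"
    using Cpt.rb_coop_lcomp[OF rbR y] .
  have "rb_lhs_pt CxH m (pt Cpt.eps g) (pt y Hpt.eps) (Btilde H rl rr R B)
      = rb_rhs_pt CxH m (pt Cpt.eps g) (pt y Hpt.eps) (Btilde H rl rr R B)"
    by (rule rb_coop_points[OF rbT M.comm_alg_axioms alg_pt[OF Cpt.alg_eps g]])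
  then have "la (lcomp g B) (lcomp y R)
      = la (lcomp g B) (ra (lcomp (la g (la (lcomp g B) (ra y (Hpt.cinv (lcomp g B))))) R)
          (lcomp g B))"
    unfolding rb_lhs_pt_def rb_rhs_pt_def
    using Hpt.rb_coop_lcomp_eps[OF rbB] Cpt.rb_coop_lcomp_eps[OF rbR] ga ry g y
    by (simp add: pt_Btilde pt_cinv pt_conv group_simps pt_eq_iff Hpt.rb_coop_lcomp[OF rbB])
  then have "lcomp y R = ra (lcomp (la g (la (lcomp g B) (ra y (Hpt.cinv (lcomp g B))))) R)
        (lcomp g B)"
    by (metis la_cinv_la ga)
  then have "ra (lcomp y R) (Hpt.cinv (lcomp g B))
      = lcomp (la g (la (lcomp g B) (ra y (Hpt.cinv (lcomp g B))))) R"
    using ga by (simp add: ra_ra_cinv)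
  then show ?thesis
    using g ga by (simp add: cond2_pt_def group_simps)
qed

lemma cond1_pt_of_smash:
  assumes rbB: "rb_coop H B" and rbT: "rb_coop CxH (Btilde H rl rr R B)" and R: "alg_endo C R"
    and x: "Cpt.alg x" and y: "Cpt.alg y" and h: "Hpt.alg h"
  shows "cond1_pt R B x y h"
proof -
  have ha: "Hpt.alg (lcomp h B)"
    using Hpt.rb_coop_lcomp[OF rbB h] .
  have rx: "Cpt.alg (lcomp x R)" "Cpt.alg (lcomp y R)"
    using Cpt.alg_endo_lcomp[OF R] x y by auto
  have "rb_lhs_pt CxH m (pt x Hpt.eps) (pt y h) (Btilde H rl rr R B)
      = rb_rhs_pt CxH m (pt x Hpt.eps) (pt y h) (Btilde H rl rr R B)"
    by (rule rb_coop_points[OF rbT M.comm_alg_axioms alg_pt[OF x Hpt.alg_eps]])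
  then have "Cpt.conv (ra (lcomp x R) (lcomp h B)) (la (lcomp h B) (ra (lcomp y R) (lcomp h B)))
      = la (lcomp h B) (ra (lcomp (Cpt.conv (ra x h) (Cpt.conv (ra (lcomp x R) h)
          (Cpt.conv y (la h (Cpt.cinv (lcomp x R)))))) R) (lcomp h B))"
    unfolding rb_lhs_pt_def rb_rhs_pt_def
    using Hpt.rb_coop_lcomp_eps[OF rbB] ha rx h x y
    by (simp add: pt_Btilde pt_cinv pt_conv group_simps pt_eq_iff Hpt.rb_coop_lcomp[OF rbB])
  then have "la (Hpt.cinv (lcomp h B)) (ra (Cpt.conv (ra (lcomp x R) (lcomp h B))
        (la (lcomp h B) (ra (lcomp y R) (lcomp h B)))) (Hpt.cinv (lcomp h B)))
      = lcomp (Cpt.conv (ra x h) (Cpt.conv (ra (lcomp x R) h)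
          (Cpt.conv y (la h (Cpt.cinv (lcomp x R)))))) R"
    using ha by (simp add: la_cinv_la ra_ra_cinv ra_la_commute)
  then show ?thesis
    using ha rx h x y by (simp add: cond1_pt_def group_simps)
qed

end

context bicomod
begin

lemma bicomod_pointsI: "comm_alg m one \<Longrightarrow> bicomod_points H C rl rr m one"
  by (intro bicomod_points.intro bicomod.intro H.commutative_hopf_axioms C.commutative_hopf_axioms
      bicomod_axioms)

lemma alg_endo_R_of_smash:
  assumes rbB: "rb_coop H B" and T: "alg_endo CxH (Btilde H rl rr R B)"
  shows "alg_endo C R"
proof -
  interpret P: bicomod_points H C rl rr "mulv C" "hone C"
    by (rule bicomod_pointsI[OF C.A.comm_alg_axioms])
  have "alg_map CxH (mulv C) (hone C) (lcomp (P.pt bas P.Hpt.eps) (Btilde H rl rr R B))"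
    using alg_map_lcomp[OF C.A.comm_alg_axioms P.alg_pt[OF alg_map_bas P.Hpt.alg_eps]] T
    by (simp add: alg_endo_def)
  moreover have "lcomp (P.pt bas P.Hpt.eps) (Btilde H rl rr R B) = P.pt (lcomp bas R) P.Hpt.eps"
    using P.Hpt.rb_coop_lcomp_eps[OF rbB] P.Hpt.alg_eps
    by (simp add: P.pt_Btilde P.la_Heps P.ra_Heps)
  ultimately have "alg_map C (mulv C) (hone C) (lcomp bas R)"
    using P.alg_C_part by (fastforce simp: P.lin_pt_tens_one P.Hpt.alg_eps)
  then show ?thesis
    by (simp add: lcomp_bas alg_endo_of_alg_map[OF C.A.comm_alg_axioms])
qed

lemma rb_coop_R_of_smash:
  assumes rbB: "rb_coop H B" and rbT: "rb_coop CxH (Btilde H rl rr R B)" and R: "alg_endo C R"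
  shows "rb_coop C R"
proof (rule rb_coop_of_points[OF C.A.comm_alg_axioms R])
  note CC = comm_alg_tens_alg[OF C.A.comm_alg_axioms C.A.comm_alg_axioms]
  interpret P: bicomod_points H C rl rr "tens_alg (mulv C) (mulv C)" "tens (hone C) (hone C)"
    by (rule bicomod_pointsI[OF CC])
  show "rb_lhs_pt C (tens_alg (mulv C) (mulv C)) (incl_left (hone C)) (incl_right (hone C)) R =
        rb_rhs_pt C (tens_alg (mulv C) (mulv C)) (incl_left (hone C)) (incl_right (hone C)) R"
    by (rule P.rb_pt_R_of_smash[OF rbB rbT])
      (simp_all add: alg_map_incl_left alg_map_incl_right C.A.comm_alg_axioms)
qed

lemma cond2_of_smash:
  assumes rbB: "rb_coop H B" and rbT: "rb_coop CxH (Btilde H rl rr R B)" and rbR: "rb_coop C R"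
  shows "cond2 H rl rr R B c"
proof (rule cond2_of_bas)
  fix c0
  note HC = comm_alg_tens_alg[OF H.A.comm_alg_axioms C.A.comm_alg_axioms]
  interpret P: bicomod_points H C rl rr "tens_alg (mulv H) (mulv C)" "tens (hone H) (hone C)"
    by (rule bicomod_pointsI[OF HC])
  let ?g = "incl_left (hone C) :: 'h \<Rightarrow> ('h \<times> 'c,'k) vec"
  let ?y = "incl_right (hone H) :: 'c \<Rightarrow> ('h \<times> 'c,'k) vec"
  have g: "P.Hpt.alg ?g" and y: "P.Cpt.alg ?y"
    by (simp_all add: alg_map_incl_left alg_map_incl_right H.A.comm_alg_axioms C.A.comm_alg_axioms)
  have gB: "P.Hpt.alg (lcomp ?g B)"
    by (rule P.Hpt.rb_coop_lcomp[OF rbB g])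
  show "cond2 H rl rr R B (bas c0)"
    using P.cond2_pt_of_smash[OF rbB rbT rbR g y]
      P.lin_cond2_lhs[OF g gB, where y = ?y and c = c0 and R = R]
      P.lin_cond2_rhs[where g = ?g and y = ?y and c = c0 and R = R and B = B]
    by (simp add: cond2_def P.cond2_pt_def
        lin_tens_alg_incl[OF H.A.comm_alg_axioms C.A.comm_alg_axioms])
qed

lemma cond1_of_smash:
  assumes rbB: "rb_coop H B" and rbT: "rb_coop CxH (Btilde H rl rr R B)" and R: "alg_endo C R"
  shows "cond1 H C rl rr R B c"
proof (rule cond1_of_bas)
  fix c0
  note cC = C.A.comm_alg_axioms and cH = H.A.comm_alg_axioms
  note CH = comm_alg_tens_alg[OF cC cH]
  note CCH = comm_alg_tens_alg[OF cC CH]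
  let ?A = "tens_alg (mulv C) (tens_alg (mulv C) (mulv H))"
  interpret P: bicomod_points H C rl rr ?A "tens (hone C) (tens (hone C) (hone H))"
    by (rule bicomod_pointsI[OF CCH])
  \<comment> \<open>the inclusions of the three tensor factors: pairing with them is the identity\<close>
  let ?x = "incl_left (tens (hone C) (hone H)) :: 'c \<Rightarrow> ('c \<times> 'c \<times> 'h,'k) vec"
  let ?y = "\<lambda>v. tens (hone C) (incl_left (hone H) v) :: ('c \<times> 'c \<times> 'h,'k) vec"
  let ?h = "\<lambda>w. tens (hone C) (incl_right (hone C) w) :: ('c \<times> 'c \<times> 'h,'k) vec"
  have x: "P.Cpt.alg ?x"
    by (simp add: alg_map_incl_left[OF cC CH])
  have y: "P.Cpt.alg ?y"
    by (rule alg_map_tens_one_left[OF cC CH alg_map_incl_left[OF cC cH]]) simp_all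
  have h: "P.Hpt.alg ?h"
    by (rule alg_map_tens_one_left[OF cC CH alg_map_incl_right[OF cC cH]]) simp_all
  have xR: "P.Cpt.alg (lcomp ?x R)"
    by (rule P.Cpt.alg_endo_lcomp[OF R x])
  have "?A (?x u) (?A (?y v) (?h w)) = bas (u,(v,w))" for u v w
    by (simp add: incl_left_def incl_right_def tens_alg_tens[OF cC CH] tens_alg_tens[OF cC cH]
        comm_alg.one_left[OF cC] comm_alg.one_right[OF cC] comm_alg.one_left[OF cH]
        comm_alg.one_right[OF cH] comm_alg.one_left[OF CH] flip: tens_bas)
  then have pairing_id: "lin (\<lambda>(u,v,w). ?A (?x u) (?A (?y v) (?h w))) V = V" for V
    by (simp add: split_def)
  show "cond1 H C rl rr R B (bas c0)"
    unfolding cond1_def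
    using P.cond1_pt_of_smash[OF rbB rbT R x y h, unfolded P.cond1_pt_def]
      P.lin_cond1_lhs[OF x xR h, where y = ?y and c = c0]
      P.lin_cond1_rhs[where x = ?x and y = ?y and h = ?h and c = c0 and R = R and B = B]
    by (simp only: pairing_id)
qed

lemma alg_endo_Btilde:
  assumes rbB: "rb_coop H B" and R: "alg_endo C R"
  shows "alg_endo CxH (Btilde H rl rr R B)"
proof -
  interpret P: bicomod_points H C rl rr "mulv CxH" "hone CxH"
    by (rule bicomod_pointsI[OF comm_alg_smash])
  let ?x = "P.C_part bas" and ?g = "P.H_part bas"
  have x: "P.Cpt.alg ?x" and g: "P.Hpt.alg ?g"
    using P.alg_C_part P.alg_H_part alg_map_bas by blast+
  have gB: "P.Hpt.alg (lcomp ?g B)"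
    by (rule P.Hpt.rb_coop_lcomp[OF rbB g])
  have "Btilde H rl rr R B = lcomp (P.pt ?x ?g) (Btilde H rl rr R B)"
    using P.alg_map_smash_eq_pt[OF alg_map_bas] by (simp add: lcomp_bas)
  also have "\<dots> = P.pt (P.la (lcomp ?g B) (P.ra (lcomp ?x R) (lcomp ?g B))) (lcomp ?g B)"
    by (rule P.pt_Btilde[OF gB])
  finally have "alg_map CxH (mulv CxH) (hone CxH) (Btilde H rl rr R B)"
    using P.alg_pt P.alg_la P.alg_ra gB P.Cpt.alg_endo_lcomp[OF R x] by metis
  then show ?thesis
    by (rule alg_endo_of_alg_map[OF comm_alg_smash])
qed

lemma rb_coop_Btilde:
  assumes rbB: "rb_coop H B" and R: "alg_endo C R"
    and cond1: "\<And>c. cond1 H C rl rr R B c" and cond2: "\<And>c. cond2 H rl rr R B c"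
  shows "rb_coop CxH (Btilde H rl rr R B)"
proof (rule rb_coop_of_points[OF comm_alg_smash alg_endo_Btilde[OF rbB R]])
  let ?A = "tens_alg (mulv CxH) (mulv CxH)" and ?o = "tens (hone CxH) (hone CxH)"
  note GG = comm_alg_tens_alg[OF comm_alg_smash comm_alg_smash]
  interpret P: bicomod_points H C rl rr ?A ?o
    by (rule bicomod_pointsI[OF GG])
  have a: "alg_map CxH ?A ?o (incl_left (hone CxH))"
  and b: "alg_map CxH ?A ?o (incl_right (hone CxH))"
    by (simp_all add: alg_map_incl_left alg_map_incl_right comm_alg_smash)
  have C1: "P.cond1_pt R B x y h" if "P.Cpt.alg x" "P.Cpt.alg y" "P.Hpt.alg h" for x y h
    using P.cond1_pt_of_cond1[OF cond1] P.Cpt.alg_endo_lcomp[OF R] that by blast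
  have C2: "P.cond2_pt R B g y" if "P.Hpt.alg g" "P.Cpt.alg y" for g y
    using P.cond2_pt_of_cond2[OF cond2] P.Hpt.rb_coop_lcomp[OF rbB] that by blast
  show "rb_lhs_pt CxH ?A (incl_left (hone CxH)) (incl_right (hone CxH)) (Btilde H rl rr R B) =
        rb_rhs_pt CxH ?A (incl_left (hone CxH)) (incl_right (hone CxH)) (Btilde H rl rr R B)"
    using P.rb_pt_Btilde[OF rbB R C1 C2 P.alg_C_part[OF a] P.alg_C_part[OF b] P.alg_H_part[OF a]
        P.alg_H_part[OF b]]
    by (simp flip: P.alg_map_smash_eq_pt[OF a] P.alg_map_smash_eq_pt[OF b])
qed

end

theorem theorem3p3:
  fixes H :: "('h,'k::field) hopf" and C :: "('c,'k) hopf"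
    and rl :: "'c \<Rightarrow> ('h \<times> 'c,'k) vec" and rr :: "'c \<Rightarrow> ('c \<times> 'h,'k) vec"
    and R :: "'c \<Rightarrow> ('c,'k) vec" and B :: "'h \<Rightarrow> ('h,'k) vec"
  assumes "comm_hopf H" and "comm_hopf C" and "bicomod_hopf H C rl rr"
    and "rb_coop H B"
  shows "rb_coop (smash H C rl rr) (Btilde H rl rr R B) \<longleftrightarrow>
         rb_coop C R \<and> (\<forall>c. cond1 H C rl rr R B c) \<and> (\<forall>c. cond2 H rl rr R B c)"
proof -
  interpret bicomod H C rl rr
    using assms(1-3) by (simp add: bicomod_def bicomod_axioms_def commutative_hopf_def)
  show ?thesis
  proof
    assume rbT: "rb_coop CxH (Btilde H rl rr R B)"
    then have R: "alg_endo C R"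
      using alg_endo_R_of_smash[OF assms(4)] by (simp add: rb_coop_iff)
    then have "rb_coop C R"
      using rb_coop_R_of_smash[OF assms(4) rbT] by blast
    then show "rb_coop C R \<and> (\<forall>c. cond1 H C rl rr R B c) \<and> (\<forall>c. cond2 H rl rr R B c)"
      using cond1_of_smash[OF assms(4) rbT R] cond2_of_smash[OF assms(4) rbT] by blast
  next
    assume "rb_coop C R \<and> (\<forall>c. cond1 H C rl rr R B c) \<and> (\<forall>c. cond2 H rl rr R B c)"
    then show "rb_coop CxH (Btilde H rl rr R B)"
      using rb_coop_Btilde[OF assms(4)] by (simp add: rb_coop_iff)
  qed
qed

end
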